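(* Let $T$ be a left pre-Hopf monad on a monoidal category $\mathcal C$. The following are equivalent: (i) the functor $\mathfrak h^l\colon\mathcal C\to\mathrm{HM}^l(T)$, $X\mapsto(TX,\mu_X,T_2(\mathbb 1,X))$, is an equivalence of categories; (ii) $T$ is conservative, every left Hopf $T$-module admits a coinvariant part, and $T$ preserves coinvariant parts of left Hopf $T$-modules. If these hold, the functor $\mathbb M\mapsto\mathbb M_T$ (coinvariant part) is quasi-inverse to $\mathfrak h^l$.
   Context: Monoidal categories are strict. A bimonad is a monad $(T,\mu,\eta)$ with comonoidal structure $T_2(X,Y)\colon T(X\otimes Y)\to TX\otimes TY$, $T_0\colon T\mathbb 1\to\mathbb 1$ making $\mu,\eta$ comonoidal. $T$ is a left pre-Hopf monad if $H^l_{\mathbb 1,X}=(T\mathbb 1\otimes\mu_X)T_2(\mathbb 1,TX)$ is invertible for all $X$. $T\mathbb 1$ is a coalgebra in $\mathcal C$ with coproduct $T_2(\mathbb 1,\mathbb 1)$ and counit $T_0$. A left Hopf $T$-module is a triple $(M,r,\rho)$ with $(M,r)$ a $T$-module ($rT(r)=r\mu_M$, $r\eta_M=\mathrm{id}$), $(M,\rho)$ a left $T\mathbb 1$-comodule in $\mathcal C$, and $\rho r=(\mu_{\mathbb 1}\otimes r)T_2(T\mathbb 1,M)T(\rho)$; morphisms are $f\colon M\to N$ with $fr=sT(f)$ and $(T\mathbb 1\otimes f)\rho=\varrho f$; these form the category $\mathrm{HM}^l(T)$. The coinvariant part of $\mathbb M=(M,r,\rho)$ is an equalizer $i\colon\mathbb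 M_T\to M$ of the pair $\eta_{\mathbb 1}\otimes M,\ \rho\colon M\rightrightarrows T\mathbb 1\otimes M$. $T$ preserves coinvariant parts if whenever such an equalizer $i$ exists, $T(i)$ is an equalizer of $T(\eta_{\mathbb 1}\otimes M),T(\rho)$. Conservative: reflects isomorphisms. *)

theory Defs
  imports Main
begin

record ('o, 'm) cat =
  Obj :: "'o set"
  Arr :: "'m set"
  Src :: "'m \<Rightarrow> 'o"
  Tgt :: "'m \<Rightarrow> 'o"
  Idt :: "'o \<Rightarrow> 'm"
  Cmp :: "'m \<Rightarrow> 'm \<Rightarrow> 'm"   (* Cmp C g f = g \<circ> f *)

definition hom :: "('o, 'm, 'z) cat_scheme \<Rightarrow> 'o \<Rightarrow> 'o \<Rightarrow> 'm set" where
  "hom C a b = {f \<in> Arr C. Src C f = a \<and> Tgt C f = b}"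

definition category :: "('o, 'm, 'z) cat_scheme \<Rightarrow> bool" where
  "category C \<longleftrightarrow>
     (\<forall>f\<in>Arr C. Src C f \<in> Obj C \<and> Tgt C f \<in> Obj C) \<and>
     (\<forall>a\<in>Obj C. Idt C a \<in> hom C a a) \<and>
     (\<forall>f\<in>Arr C. \<forall>g\<in>Arr C. Tgt C f = Src C g \<longrightarrow> Cmp C g f \<in> hom C (Src C f) (Tgt C g)) \<and>
     (\<forall>f\<in>Arr C. Cmp C (Idt C (Tgt C f)) f = f \<and> Cmp C f (Idt C (Src C f)) = f) \<and>
     (\<forall>f\<in>Arr C. \<forall>g\<in>Arr C. \<forall>h\<in>Arr C. Tgt C f = Src C g \<longrightarrow> Tgt C g = Src C h \<longrightarrow>
        Cmp C h (Cmp C g f) = Cmp C (Cmp C h g) f)"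

definition iso :: "('o, 'm, 'z) cat_scheme \<Rightarrow> 'm \<Rightarrow> bool" where
  "iso C f \<longleftrightarrow> f \<in> Arr C \<and>
     (\<exists>g\<in>hom C (Tgt C f) (Src C f). Cmp C g f = Idt C (Src C f) \<and> Cmp C f g = Idt C (Tgt C f))"

definition "functor" :: "('oa, 'ma, 'za) cat_scheme \<Rightarrow> ('ob, 'mb, 'zb) cat_scheme \<Rightarrow>
    ('oa \<Rightarrow> 'ob) \<Rightarrow> ('ma \<Rightarrow> 'mb) \<Rightarrow> bool" where
  "functor A B FO FM \<longleftrightarrow> category A \<and> category B \<and>
     (\<forall>a\<in>Obj A. FO a \<in> Obj B) \<and>
     (\<forall>f\<in>Arr A. FM f \<in> hom B (FO (Src A f)) (FO (Tgt A f))) \<and>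
     (\<forall>a\<in>Obj A. FM (Idt A a) = Idt B (FO a)) \<and>
     (\<forall>f\<in>Arr A. \<forall>g\<in>Arr A. Tgt A f = Src A g \<longrightarrow> FM (Cmp A g f) = Cmp B (FM g) (FM f))"

definition nat_iso :: "('oa, 'ma, 'za) cat_scheme \<Rightarrow> ('ob, 'mb, 'zb) cat_scheme \<Rightarrow>
    ('oa \<Rightarrow> 'ob) \<Rightarrow> ('ma \<Rightarrow> 'mb) \<Rightarrow> ('oa \<Rightarrow> 'ob) \<Rightarrow> ('ma \<Rightarrow> 'mb) \<Rightarrow> ('oa \<Rightarrow> 'mb) \<Rightarrow> bool" where
  "nat_iso A B FO FM GO GM phi \<longleftrightarrow>
     (\<forall>a\<in>Obj A. phi a \<in> hom B (FO a) (GO a) \<and> iso B (phi a)) \<and>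
     (\<forall>f\<in>Arr A. Cmp B (phi (Tgt A f)) (FM f) = Cmp B (GM f) (phi (Src A f)))"

definition quasi_inverse :: "('oa, 'ma, 'za) cat_scheme \<Rightarrow> ('ob, 'mb, 'zb) cat_scheme \<Rightarrow>
    ('oa \<Rightarrow> 'ob) \<Rightarrow> ('ma \<Rightarrow> 'mb) \<Rightarrow> ('ob \<Rightarrow> 'oa) \<Rightarrow> ('mb \<Rightarrow> 'ma) \<Rightarrow> bool" where
  "quasi_inverse A B FO FM GO GM \<longleftrightarrow> functor A B FO FM \<and> functor B A GO GM \<and>
     (\<exists>phi. nat_iso A A (\<lambda>a. a) (\<lambda>f. f) (GO \<circ> FO) (GM \<circ> FM) phi) \<and>
     (\<exists>psi. nat_iso B B (\<lambda>b. b) (\<lambda>f. f) (FO \<circ> GO) (FM \<circ> GM) psi)"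

definition equivalence :: "('oa, 'ma, 'za) cat_scheme \<Rightarrow> ('ob, 'mb, 'zb) cat_scheme \<Rightarrow>
    ('oa \<Rightarrow> 'ob) \<Rightarrow> ('ma \<Rightarrow> 'mb) \<Rightarrow> bool" where
  "equivalence A B FO FM \<longleftrightarrow>
     (\<exists>(GO :: 'ob \<Rightarrow> 'oa) (GM :: 'mb \<Rightarrow> 'ma). quasi_inverse A B FO FM GO GM)"

definition is_equalizer :: "('o, 'm, 'z) cat_scheme \<Rightarrow> 'm \<Rightarrow> 'm \<Rightarrow> 'o \<Rightarrow> 'm \<Rightarrow> bool" where
  "is_equalizer C f g E i \<longleftrightarrow>
     f \<in> Arr C \<and> g \<in> hom C (Src C f) (Tgt C f) \<and>
     i \<in> hom C E (Src C f) \<and> Cmp C f i = Cmp C g i \<and>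
     (\<forall>Z\<in>Obj C. \<forall>k\<in>hom C Z (Src C f). Cmp C f k = Cmp C g k \<longrightarrow>
        (\<exists>!u. u \<in> hom C Z E \<and> Cmp C i u = k))"

record ('o, 'm) mcat = "('o, 'm) cat" +
  tns :: "'o \<Rightarrow> 'o \<Rightarrow> 'o"
  tnm :: "'m \<Rightarrow> 'm \<Rightarrow> 'm"
  unt :: "'o"

definition strict_monoidal :: "('o, 'm, 'z) mcat_scheme \<Rightarrow> bool" where
  "strict_monoidal C \<longleftrightarrow> category C \<and> unt C \<in> Obj C \<and>
     (\<forall>a\<in>Obj C. \<forall>b\<in>Obj C. tns C a b \<in> Obj C) \<and>
     (\<forall>f\<in>Arr C. \<forall>g\<in>Arr C. tnm C f g \<in> hom C (tns C (Src C f) (Src C g)) (tns C (Tgt C f) (Tgt C g))) \<and>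
     (\<forall>a\<in>Obj C. \<forall>b\<in>Obj C. tnm C (Idt C a) (Idt C b) = Idt C (tns C a b)) \<and>
     (\<forall>f\<in>Arr C. \<forall>f'\<in>Arr C. \<forall>g\<in>Arr C. \<forall>g'\<in>Arr C.
        Tgt C f = Src C f' \<longrightarrow> Tgt C g = Src C g' \<longrightarrow>
        tnm C (Cmp C f' f) (Cmp C g' g) = Cmp C (tnm C f' g') (tnm C f g)) \<and>
     (\<forall>a\<in>Obj C. \<forall>b\<in>Obj C. \<forall>c\<in>Obj C. tns C (tns C a b) c = tns C a (tns C b c)) \<and>
     (\<forall>f\<in>Arr C. \<forall>g\<in>Arr C. \<forall>h\<in>Arr C. tnm C (tnm C f g) h = tnm C f (tnm C g h)) \<and>
     (\<forall>a\<in>Obj C. tns C (unt C) a = a \<and> tns C a (unt C) = a) \<and>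
     (\<forall>f\<in>Arr C. tnm C (Idt C (unt C)) f = f \<and> tnm C f (Idt C (unt C)) = f)"

record ('o, 'm) bimonad_data =
  TO :: "'o \<Rightarrow> 'o"
  TM :: "'m \<Rightarrow> 'm"
  mu :: "'o \<Rightarrow> 'm"
  eta :: "'o \<Rightarrow> 'm"
  T2 :: "'o \<Rightarrow> 'o \<Rightarrow> 'm"
  T0 :: "'m"

definition bimonad :: "('o, 'm, 'z) mcat_scheme \<Rightarrow> ('o, 'm, 'w) bimonad_data_scheme \<Rightarrow> bool" where
  "bimonad C T \<longleftrightarrow> strict_monoidal C \<and> functor C C (TO T) (TM T) \<and>
     \<comment> \<open>monad structure\<close>
     (\<forall>X\<in>Obj C. mu T X \<in> hom C (TO T (TO T X)) (TO T X) \<and> eta T X \<in> hom C X (TO T X)) \<and>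
     (\<forall>f\<in>Arr C. Cmp C (mu T (Tgt C f)) (TM T (TM T f)) = Cmp C (TM T f) (mu T (Src C f)) \<and>
                Cmp C (eta T (Tgt C f)) f = Cmp C (TM T f) (eta T (Src C f))) \<and>
     (\<forall>X\<in>Obj C. Cmp C (mu T X) (TM T (mu T X)) = Cmp C (mu T X) (mu T (TO T X)) \<and>
                Cmp C (mu T X) (eta T (TO T X)) = Idt C (TO T X) \<and>
                Cmp C (mu T X) (TM T (eta T X)) = Idt C (TO T X)) \<and>
     \<comment> \<open>comonoidal structure\<close>
     (\<forall>X\<in>Obj C. \<forall>Y\<in>Obj C. T2 T X Y \<in> hom C (TO T (tns C X Y)) (tns C (TO T X) (TO T Y))) \<and>
     (\<forall>f\<in>Arr C. \<forall>g\<in>Arr C.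
        Cmp C (T2 T (Tgt C f) (Tgt C g)) (TM T (tnm C f g)) =
        Cmp C (tnm C (TM T f) (TM T g)) (T2 T (Src C f) (Src C g))) \<and>
     T0 T \<in> hom C (TO T (unt C)) (unt C) \<and>
     (\<forall>X\<in>Obj C. \<forall>Y\<in>Obj C. \<forall>Z\<in>Obj C.
        Cmp C (tnm C (T2 T X Y) (Idt C (TO T Z))) (T2 T (tns C X Y) Z) =
        Cmp C (tnm C (Idt C (TO T X)) (T2 T Y Z)) (T2 T X (tns C Y Z))) \<and>
     (\<forall>X\<in>Obj C. Cmp C (tnm C (T0 T) (Idt C (TO T X))) (T2 T (unt C) X) = Idt C (TO T X) \<and>
                Cmp C (tnm C (Idt C (TO T X)) (T0 T)) (T2 T X (unt C)) = Idt C (TO T X)) \<and>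
     \<comment> \<open>mu and eta are comonoidal\<close>
     (\<forall>X\<in>Obj C. \<forall>Y\<in>Obj C.
        Cmp C (T2 T X Y) (mu T (tns C X Y)) =
        Cmp C (tnm C (mu T X) (mu T Y)) (Cmp C (T2 T (TO T X) (TO T Y)) (TM T (T2 T X Y))) \<and>
        Cmp C (T2 T X Y) (eta T (tns C X Y)) = tnm C (eta T X) (eta T Y)) \<and>
     Cmp C (T0 T) (mu T (unt C)) = Cmp C (T0 T) (TM T (T0 T)) \<and>
     Cmp C (T0 T) (eta T (unt C)) = Idt C (unt C)"

definition left_pre_hopf :: "('o, 'm, 'z) mcat_scheme \<Rightarrow> ('o, 'm, 'w) bimonad_data_scheme \<Rightarrow> bool" where
  "left_pre_hopf C T \<longleftrightarrow> bimonad C T \<and>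
     (\<forall>X\<in>Obj C. iso C (Cmp C (tnm C (Idt C (TO T (unt C))) (mu T X)) (T2 T (unt C) (TO T X))))"

definition t_module :: "('o, 'm, 'z) mcat_scheme \<Rightarrow> ('o, 'm, 'w) bimonad_data_scheme \<Rightarrow> 'o \<Rightarrow> 'm \<Rightarrow> bool" where
  "t_module C T M r \<longleftrightarrow> M \<in> Obj C \<and> r \<in> hom C (TO T M) M \<and>
     Cmp C r (TM T r) = Cmp C r (mu T M) \<and> Cmp C r (eta T M) = Idt C M"

text \<open>Left comodule over the coalgebra T1 (coproduct T_2(1,1), counit T_0).\<close>
definition t1_comodule :: "('o, 'm, 'z) mcat_scheme \<Rightarrow> ('o, 'm, 'w) bimonad_data_scheme \<Rightarrow> 'o \<Rightarrow> 'm \<Rightarrow> bool" where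
  "t1_comodule C T M \<rho> \<longleftrightarrow> M \<in> Obj C \<and> \<rho> \<in> hom C M (tns C (TO T (unt C)) M) \<and>
     Cmp C (tnm C (T2 T (unt C) (unt C)) (Idt C M)) \<rho> = Cmp C (tnm C (Idt C (TO T (unt C))) \<rho>) \<rho> \<and>
     Cmp C (tnm C (T0 T) (Idt C M)) \<rho> = Idt C M"

definition hopf_module :: "('o, 'm, 'z) mcat_scheme \<Rightarrow> ('o, 'm, 'w) bimonad_data_scheme \<Rightarrow> 'o \<times> 'm \<times> 'm \<Rightarrow> bool" where
  "hopf_module C T MM \<longleftrightarrow> (case MM of (M, r, \<rho>) \<Rightarrow>
     t_module C T M r \<and> t1_comodule C T M \<rho> \<and>
     Cmp C \<rho> r = Cmp C (tnm C (mu T (unt C)) r) (Cmp C (T2 T (TO T (unt C)) M) (TM T \<rho>)))"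

definition hopf_morphism :: "('o, 'm, 'z) mcat_scheme \<Rightarrow> ('o, 'm, 'w) bimonad_data_scheme \<Rightarrow>
    'o \<times> 'm \<times> 'm \<Rightarrow> 'o \<times> 'm \<times> 'm \<Rightarrow> 'm \<Rightarrow> bool" where
  "hopf_morphism C T MM NN f \<longleftrightarrow> (case MM of (M, r, \<rho>) \<Rightarrow> case NN of (N, s, \<sigma>) \<Rightarrow>
     f \<in> hom C M N \<and> Cmp C f r = Cmp C s (TM T f) \<and>
     Cmp C (tnm C (Idt C (TO T (unt C))) f) \<rho> = Cmp C \<sigma> f)"

text \<open>The category HM^l(T): arrows are triples (source, target, underlying morphism).\<close>
definition HM :: "('o, 'm, 'z) mcat_scheme \<Rightarrow> ('o, 'm, 'w) bimonad_data_scheme \<Rightarrow>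
    ('o \<times> 'm \<times> 'm, ('o \<times> 'm \<times> 'm) \<times> ('o \<times> 'm \<times> 'm) \<times> 'm) cat" where
  "HM C T = \<lparr> Obj = {MM. hopf_module C T MM},
             Arr = {(MM, NN, f). hopf_module C T MM \<and> hopf_module C T NN \<and> hopf_morphism C T MM NN f},
             Src = (\<lambda>F. fst F),
             Tgt = (\<lambda>F. fst (snd F)),
             Idt = (\<lambda>MM. (MM, MM, Idt C (fst MM))),
             Cmp = (\<lambda>G F. (fst F, fst (snd G), Cmp C (snd (snd G)) (snd (snd F)))) \<rparr>"

definition hlO :: "('o, 'm, 'z) mcat_scheme \<Rightarrow> ('o, 'm, 'w) bimonad_data_scheme \<Rightarrow> 'o \<Rightarrow> 'o \<times> 'm \<times> 'm" where
  "hlO C T X = (TO T X, mu T X, T2 T (unt C) X)"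

definition hlM :: "('o, 'm, 'z) mcat_scheme \<Rightarrow> ('o, 'm, 'w) bimonad_data_scheme \<Rightarrow>
    'm \<Rightarrow> ('o \<times> 'm \<times> 'm) \<times> ('o \<times> 'm \<times> 'm) \<times> 'm" where
  "hlM C T f = (hlO C T (Src C f), hlO C T (Tgt C f), TM T f)"

definition coinvariant_part :: "('o, 'm, 'z) mcat_scheme \<Rightarrow> ('o, 'm, 'w) bimonad_data_scheme \<Rightarrow>
    'o \<times> 'm \<times> 'm \<Rightarrow> 'o \<Rightarrow> 'm \<Rightarrow> bool" where
  "coinvariant_part C T MM E i \<longleftrightarrow> (case MM of (M, r, \<rho>) \<Rightarrow>
     is_equalizer C (tnm C (eta T (unt C)) (Idt C M)) \<rho> E i)"

definition has_coinvariant_parts :: "('o, 'm, 'z) mcat_scheme \<Rightarrow> ('o, 'm, 'w) bimonad_data_scheme \<Rightarrow> bool" where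
  "has_coinvariant_parts C T \<longleftrightarrow>
     (\<forall>MM. hopf_module C T MM \<longrightarrow> (\<exists>E i. coinvariant_part C T MM E i))"

definition preserves_coinvariant_parts :: "('o, 'm, 'z) mcat_scheme \<Rightarrow> ('o, 'm, 'w) bimonad_data_scheme \<Rightarrow> bool" where
  "preserves_coinvariant_parts C T \<longleftrightarrow>
     (\<forall>M r \<rho> E i. hopf_module C T (M, r, \<rho>) \<longrightarrow> coinvariant_part C T (M, r, \<rho>) E i \<longrightarrow>
        is_equalizer C (TM T (tnm C (eta T (unt C)) (Idt C M))) (TM T \<rho>) (TO T E) (TM T i))"

definition conservative :: "('o, 'm, 'z) mcat_scheme \<Rightarrow> ('o, 'm, 'w) bimonad_data_scheme \<Rightarrow> bool" where
  "conservative C T \<longleftrightarrow> (\<forall>f\<in>Arr C. iso C (TM T f) \<longrightarrow> iso C f)"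

text \<open>Any choice of coinvariant parts gives such a functor.\<close>
definition coinvariant_functor :: "('o, 'm, 'z) mcat_scheme \<Rightarrow> ('o, 'm, 'w) bimonad_data_scheme \<Rightarrow>
    ('o \<times> 'm \<times> 'm \<Rightarrow> 'o) \<Rightarrow> (('o \<times> 'm \<times> 'm) \<times> ('o \<times> 'm \<times> 'm) \<times> 'm \<Rightarrow> 'm) \<Rightarrow> ('o \<times> 'm \<times> 'm \<Rightarrow> 'm) \<Rightarrow> bool" where
  "coinvariant_functor C T GO GM \<iota> \<longleftrightarrow> functor (HM C T) C GO GM \<and>
     (\<forall>MM\<in>Obj (HM C T). coinvariant_part C T MM (GO MM) (\<iota> MM)) \<and>
     (\<forall>F\<in>Arr (HM C T). Cmp C (\<iota> (Tgt (HM C T) F)) (GM F) = Cmp C (snd (snd F)) (\<iota> (Src (HM C T) F)))"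

end

theory Submission
  imports Defs
begin

text \<open>
  The proof rests on one fact valid
  for every Hopf module \<open>(M, r, \<rho>)\<close>: the pre-Hopf condition makes \<open>K = (T\<one> \<otimes> r) T\<^sub>2(\<one>, M)\<close>
  invertible, and \<open>j = K\<inverse> \<rho>\<close> is a section of \<open>r\<close> exhibiting \<open>M\<close> as an equalizer of
  \<open>T(\<eta>\<^sub>\<one> \<otimes> M)\<close> and \<open>T\<rho>\<close> (theorem \<open>section_equalizer\<close>).  Consequently, for a coinvariant part
  \<open>i : E \<rightarrow> M\<close>, \<open>T\<close> preserves it iff the counit \<open>r T(i) : hl(E) \<rightarrow> M\<close> is invertible
  (theorem \<open>preserves_iff_counit_iso\<close>).

  (ii) \<Rightarrow> (i): coinvariant parts assemble into a functor \<open>G\<close>; the counit is invertible by the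
  criterion above, and the unit \<open>X \<rightarrow> (hl X)\<^sub>T\<close> is invertible because \<open>T\<close> maps it to a
  comparison of two equalizers and \<open>T\<close> is conservative.
  (i) \<Rightarrow> (ii): an equivalence is full, faithful and reflects isomorphisms.  Fullness and
  faithfulness make \<open>\<eta>\<^sub>X\<close> a coinvariant part of \<open>hl(X)\<close>; every Hopf module is isomorphic to a free
  one, so coinvariant parts exist, and the counit criterion yields preservation.
\<close>

section \<open>Elementary category theory\<close>

text \<open>Categories are given by explicit carriers; composition is only meaningful on composable
  arrows, so every equational lemma carries typing side conditions.  Composition is written
  \<open>g \<cdot> f\<close> and is right-associated by the simplifier.\<close>

locale cat =
  fixes C :: "('o, 'm, 'z) cat_scheme"
  assumes category: "category C"
begin

abbreviation arr where "arr f \<equiv> f \<in> Arr C"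
abbreviation obj where "obj a \<equiv> a \<in> Obj C"
abbreviation dom where "dom \<equiv> Src C"
abbreviation cod where "cod \<equiv> Tgt C"
abbreviation idt where "idt \<equiv> Idt C"
abbreviation comp (infixr "\<cdot>" 55) where "g \<cdot> f \<equiv> Cmp C g f"

lemma hom_iff [simp]: "f \<in> hom C a b \<longleftrightarrow> arr f \<and> dom f = a \<and> cod f = b"
  by (auto simp: hom_def)

lemma obj_dom [simp]: "arr f \<Longrightarrow> obj (dom f)" and obj_cod [simp]: "arr f \<Longrightarrow> obj (cod f)"
  using category by (auto simp: category_def)

lemma arr_idt [simp]: "obj a \<Longrightarrow> arr (idt a)" and dom_idt [simp]: "obj a \<Longrightarrow> dom (idt a) = a"
  and cod_idt [simp]: "obj a \<Longrightarrow> cod (idt a) = a"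
  using category by (auto simp: category_def hom_def)

lemma comp_hom:
  assumes "arr f" "arr g" "dom g = cod f"
  shows "g \<cdot> f \<in> hom C (dom f) (cod g)"
proof -
  have "\<forall>f\<in>Arr C. \<forall>g\<in>Arr C. Tgt C f = Src C g \<longrightarrow> Cmp C g f \<in> hom C (Src C f) (Tgt C g)"
    using category by (simp add: category_def)
  thus ?thesis using assms by auto
qed

lemma arr_comp [simp]: "arr f \<Longrightarrow> arr g \<Longrightarrow> dom g = cod f \<Longrightarrow> arr (g \<cdot> f)"
  and dom_comp [simp]: "arr f \<Longrightarrow> arr g \<Longrightarrow> dom g = cod f \<Longrightarrow> dom (g \<cdot> f) = dom f"
  and cod_comp [simp]: "arr f \<Longrightarrow> arr g \<Longrightarrow> dom g = cod f \<Longrightarrow> cod (g \<cdot> f) = cod g"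
  using comp_hom by auto

lemma comp_idt_left [simp]: "arr f \<Longrightarrow> cod f = a \<Longrightarrow> idt a \<cdot> f = f"
  and comp_idt_right [simp]: "arr f \<Longrightarrow> dom f = a \<Longrightarrow> f \<cdot> idt a = f"
  using category unfolding category_def by blast+

lemma assoc [simp]:
  "arr f \<Longrightarrow> arr g \<Longrightarrow> arr h \<Longrightarrow> dom g = cod f \<Longrightarrow> dom h = cod g \<Longrightarrow> (h \<cdot> g) \<cdot> f = h \<cdot> (g \<cdot> f)"
proof -
  assume a: "arr f" "arr g" "arr h" "dom g = cod f" "dom h = cod g"
  have "\<forall>f\<in>Arr C. \<forall>g\<in>Arr C. \<forall>h\<in>Arr C. Tgt C f = Src C g \<longrightarrow> Tgt C g = Src C h \<longrightarrow>
        Cmp C h (Cmp C g f) = Cmp C (Cmp C h g) f"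
    using category by (simp add: category_def)
  thus ?thesis using a by auto
qed

text \<open>An equation between composites, extended by precomposition with a further arrow; this is
  how an equation is used inside a right-associated composite.\<close>

lemma comp_extend:
  "g \<cdot> f = R \<Longrightarrow> arr x \<Longrightarrow> arr f \<Longrightarrow> arr g \<Longrightarrow> dom f = cod x \<Longrightarrow> dom g = cod f \<Longrightarrow>
   g \<cdot> (f \<cdot> x) = R \<cdot> x"
  by (drule sym) simp

definition inv_arr where
  "inv_arr f = (SOME g. g \<in> hom C (cod f) (dom f) \<and> g \<cdot> f = idt (dom f) \<and> f \<cdot> g = idt (cod f))"

lemma iso_arr [simp]: "iso C f \<Longrightarrow> arr f"
  by (simp add: iso_def)

lemma inv_arr [simp]:
  assumes "iso C f"
  shows "arr (inv_arr f)" "dom (inv_arr f) = cod f" "cod (inv_arr f) = dom f"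
    "inv_arr f \<cdot> f = idt (dom f)" "f \<cdot> inv_arr f = idt (cod f)"
proof -
  have "\<exists>g. g \<in> hom C (cod f) (dom f) \<and> g \<cdot> f = idt (dom f) \<and> f \<cdot> g = idt (cod f)"
    using assms unfolding iso_def by blast
  hence "inv_arr f \<in> hom C (cod f) (dom f) \<and> inv_arr f \<cdot> f = idt (dom f) \<and> f \<cdot> inv_arr f = idt (cod f)"
    unfolding inv_arr_def by (rule someI_ex)
  thus "arr (inv_arr f)" "dom (inv_arr f) = cod f" "cod (inv_arr f) = dom f"
    "inv_arr f \<cdot> f = idt (dom f)" "f \<cdot> inv_arr f = idt (cod f)"
    by simp_all
qed

lemma inv_arr_cancel [simp]:
  "iso C f \<Longrightarrow> arr x \<Longrightarrow> cod x = dom f \<Longrightarrow> inv_arr f \<cdot> (f \<cdot> x) = x"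
  "iso C f \<Longrightarrow> arr x \<Longrightarrow> cod x = cod f \<Longrightarrow> f \<cdot> (inv_arr f \<cdot> x) = x"
  by (simp_all add: comp_extend [OF inv_arr(4)] comp_extend [OF inv_arr(5)])

lemma isoI:
  "arr f \<Longrightarrow> arr g \<Longrightarrow> dom g = cod f \<Longrightarrow> cod g = dom f \<Longrightarrow> g \<cdot> f = idt (dom f) \<Longrightarrow>
   f \<cdot> g = idt (cod f) \<Longrightarrow> iso C f"
  unfolding iso_def by auto

lemma iso_inv_arr [simp]: "iso C f \<Longrightarrow> iso C (inv_arr f)"
  by (rule isoI [where g = f]) auto

lemma iso_idt [simp]: "obj a \<Longrightarrow> iso C (idt a)"
  by (rule isoI [where g = "idt a"]) auto

lemma iso_comp [simp]: "iso C f \<Longrightarrow> iso C g \<Longrightarrow> dom g = cod f \<Longrightarrow> iso C (g \<cdot> f)"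
  by (rule isoI [where g = "inv_arr f \<cdot> inv_arr g"]) auto

lemma iso_cancel_left:
  assumes "iso C f" "arr x" "arr y" "cod x = dom f" "cod y = dom f" "f \<cdot> x = f \<cdot> y"
  shows "x = y"
proof -
  have "inv_arr f \<cdot> (f \<cdot> x) = inv_arr f \<cdot> (f \<cdot> y)" using assms by simp
  thus ?thesis using assms(1-5) by simp
qed

lemma iso_cancel_right:
  assumes "iso C f" "arr x" "arr y" "dom x = cod f" "dom y = cod f" "x \<cdot> f = y \<cdot> f"
  shows "x = y"
proof -
  have "(x \<cdot> f) \<cdot> inv_arr f = (y \<cdot> f) \<cdot> inv_arr f" using assms by simp
  thus ?thesis using assms(1-5) by simp
qed

lemma retraction_cancel:
  assumes "arr k" "arr l" "dom l = cod k" "l \<cdot> k = idt (dom k)"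
    and "arr x" "arr y" "cod x = dom k" "cod y = dom k" "k \<cdot> x = k \<cdot> y"
  shows "x = y"
proof -
  have "l \<cdot> (k \<cdot> x) = l \<cdot> (k \<cdot> y)" using assms by simp
  thus ?thesis using assms(1-8) by (simp add: comp_extend [OF assms(4)])
qed

lemma equalizerD:
  assumes "is_equalizer C f g E i"
  shows "arr f" "arr g" "dom g = dom f" "cod g = cod f" "arr i" "dom i = E" "cod i = dom f"
    "f \<cdot> i = g \<cdot> i" "obj E"
proof -
  have h: "arr f \<and> g \<in> hom C (dom f) (cod f) \<and> i \<in> hom C E (dom f) \<and> f \<cdot> i = g \<cdot> i"
    using assms unfolding is_equalizer_def by blast
  thus "arr f" "arr g" "dom g = dom f" "cod g = cod f" "arr i" "dom i = E" "cod i = dom f"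
    "f \<cdot> i = g \<cdot> i" by simp_all
  show "obj E" using h obj_dom [of i] by simp
qed

lemma equalizer_universal:
  assumes "is_equalizer C f g E i" "arr k" "cod k = dom f" "f \<cdot> k = g \<cdot> k"
  shows "\<exists>!u. u \<in> hom C (dom k) E \<and> i \<cdot> u = k"
  using assms unfolding is_equalizer_def by simp

lemma equalizer_lift:
  assumes "is_equalizer C f g E i" "arr k" "cod k = dom f" "f \<cdot> k = g \<cdot> k"
  obtains u where "arr u" "dom u = dom k" "cod u = E" "i \<cdot> u = k"
  using equalizer_universal [OF assms] by auto

lemma equalizer_mono:
  assumes e: "is_equalizer C f g E i"
    and "arr u" "arr v" "dom u = dom v" "cod u = E" "cod v = E" "i \<cdot> u = i \<cdot> v"
  shows "u = v"
proof -
  note p = equalizerD [OF e]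
  have "f \<cdot> (i \<cdot> u) = g \<cdot> (i \<cdot> u)" using assms p by (simp add: comp_extend [OF p(8)])
  hence "\<exists>!w. w \<in> hom C (dom u) E \<and> i \<cdot> w = i \<cdot> u"
    using equalizer_universal [OF e, of "i \<cdot> u"] assms p by simp
  thus ?thesis using assms by auto
qed

lemma equalizer_comparison_iso:
  assumes e: "is_equalizer C f g E i" and e': "is_equalizer C f g E' i'"
    and u: "arr u" "dom u = E'" "cod u = E" "i \<cdot> u = i'"
  shows "iso C u"
proof -
  note p = equalizerD [OF e] and p' = equalizerD [OF e']
  obtain v where v: "arr v" "dom v = E" "cod v = E'" "i' \<cdot> v = i"
    using equalizer_lift [OF e', of i] p p' by auto
  have "u \<cdot> v = idt E"
    by (rule equalizer_mono [OF e]) (use u v p in \<open>auto simp: comp_extend [OF u(4)]\<close>)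
  moreover have "v \<cdot> u = idt E'"
    by (rule equalizer_mono [OF e']) (use u v p' in \<open>auto simp: comp_extend [OF v(4)]\<close>)
  ultimately show ?thesis using u v by (intro isoI [where g = v]) auto
qed

lemma equalizer_iso_precomp:
  assumes e: "is_equalizer C f g E i" and h: "iso C h" "cod h = E"
  shows "is_equalizer C f g (dom h) (i \<cdot> h)"
proof -
  note p = equalizerD [OF e]
  show ?thesis unfolding is_equalizer_def
  proof (intro conjI ballI impI)
    fix Z k assume k: "Z \<in> Obj C" "k \<in> hom C Z (dom f)" "f \<cdot> k = g \<cdot> k"
    then obtain u where u: "arr u" "dom u = Z" "cod u = E" "i \<cdot> u = k"
      using equalizer_lift [OF e, of k] by auto
    show "\<exists>!w. w \<in> hom C Z (dom h) \<and> (i \<cdot> h) \<cdot> w = k"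
    proof (rule ex1I [where a = "inv_arr h \<cdot> u"])
      show "inv_arr h \<cdot> u \<in> hom C Z (dom h) \<and> (i \<cdot> h) \<cdot> (inv_arr h \<cdot> u) = k"
        using u h p by auto
    next
      fix w assume w: "w \<in> hom C Z (dom h) \<and> (i \<cdot> h) \<cdot> w = k"
      have "h \<cdot> w = u" by (rule equalizer_mono [OF e]) (use w u h p in auto)
      thus "w = inv_arr h \<cdot> u" using w h by auto
    qed
  qed (use h p in \<open>auto simp: comp_extend [OF p(8)]\<close>)
qed


lemma equalizer_transport:
  assumes e: "is_equalizer C f g E i"
    and q: "iso C q" "dom q = dom f" and p: "iso C p" "dom p = cod f"
    and f': "arr f'" "dom f' = cod q" "f' \<cdot> q = p \<cdot> f"
    and g': "arr g'" "dom g' = cod q" "g' \<cdot> q = p \<cdot> g"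
  shows "is_equalizer C f' g' E (q \<cdot> i)"
proof -
  note a = equalizerD [OF e]
  have "cod (f' \<cdot> q) = cod (p \<cdot> f)" "cod (g' \<cdot> q) = cod (p \<cdot> g)" using f'(3) g'(3) by simp_all
  hence cod': "cod f' = cod p" "cod g' = cod p" using a p q f'(1,2) g'(1,2) by simp_all
  have fork: "f' \<cdot> (q \<cdot> i) = g' \<cdot> (q \<cdot> i)"
    using a p q f'(1,2) g'(1,2) by (simp add: comp_extend [OF f'(3)] comp_extend [OF g'(3)])
  show ?thesis unfolding is_equalizer_def
  proof (intro conjI ballI impI)
    fix Z k assume k: "Z \<in> Obj C" "k \<in> hom C Z (dom f')" "f' \<cdot> k = g' \<cdot> k"
    define k0 where "k0 = inv_arr q \<cdot> k"
    have k0: "arr k0" "dom k0 = Z" "cod k0 = dom f" "q \<cdot> k0 = k"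
      using k q f' by (auto simp: k0_def)
    have "p \<cdot> (f \<cdot> k0) = f' \<cdot> (q \<cdot> k0)"
      using k0(1-3) a p q f'(1,2) by (simp add: comp_extend [OF f'(3)])
    also have "\<dots> = g' \<cdot> (q \<cdot> k0)" using k0(4) k(3) by simp
    also have "\<dots> = p \<cdot> (g \<cdot> k0)"
      using k0(1-3) a p q g'(1,2) by (simp add: comp_extend [OF g'(3)])
    finally have pk: "p \<cdot> (f \<cdot> k0) = p \<cdot> (g \<cdot> k0)" .
    have fk: "f \<cdot> k0 = g \<cdot> k0"
      by (rule iso_cancel_left [OF p(1) _ _ _ _ pk]) (use a p k0 in auto)
    obtain u where u: "arr u" "dom u = Z" "cod u = E" "i \<cdot> u = k0"
      by (rule equalizer_lift [OF e, of k0]) (use k0 fk in auto)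
    show "\<exists>!w. w \<in> hom C Z E \<and> (q \<cdot> i) \<cdot> w = k"
    proof (rule ex1I [where a = u])
      show "u \<in> hom C Z E \<and> (q \<cdot> i) \<cdot> u = k" using u a q k0 by simp
    next
      fix w assume w: "w \<in> hom C Z E \<and> (q \<cdot> i) \<cdot> w = k"
      have qw: "q \<cdot> (i \<cdot> w) = q \<cdot> (i \<cdot> u)" using w u a q k0 by auto
      have iw: "i \<cdot> w = i \<cdot> u" by (rule iso_cancel_left [OF q(1) _ _ _ _ qw]) (use w u a q in auto)
      show "w = u" by (rule equalizer_mono [OF e _ _ _ _ _ iw]) (use w u in auto)
    qed
  qed (use a p q f' g' cod' fork in auto)
qed

end

lemma functor_hom: "functor A B FO FM \<Longrightarrow> f \<in> Arr A \<Longrightarrow> FM f \<in> hom B (FO (Src A f)) (FO (Tgt A f))"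
  unfolding functor_def by blast

lemma functor_iso:
  assumes F: "functor A B FO FM" and i: "iso A f"
  shows "iso B (FM f)"
proof -
  interpret A: cat A using F by (simp add: functor_def cat_def)
  interpret B: cat B using F by (simp add: functor_def cat_def)
  have f: "A.arr f" using i by simp
  have Fcomp: "\<And>g h. A.arr g \<Longrightarrow> A.arr h \<Longrightarrow> A.dom h = A.cod g \<Longrightarrow> FM (Cmp A h g) = Cmp B (FM h) (FM g)"
    and Fid: "\<And>a. A.obj a \<Longrightarrow> FM (A.idt a) = B.idt (FO a)"
    using F unfolding functor_def by auto
  have Ff: "FM f \<in> hom B (FO (A.dom f)) (FO (A.cod f))" and Fi: "FM (A.inv_arr f) \<in> hom B (FO (A.cod f)) (FO (A.dom f))"
    using functor_hom [OF F] f i by auto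
  show ?thesis
    using Ff Fi Fcomp [of f "A.inv_arr f"] Fcomp [of "A.inv_arr f" f] Fid [of "A.dom f"] Fid [of "A.cod f"] f i
    by (intro B.isoI [where g = "FM (A.inv_arr f)"]) auto
qed

lemma quasi_inverse_sym:
  "quasi_inverse A B FO FM GO GM \<Longrightarrow> quasi_inverse B A GO GM FO FM"
  unfolding quasi_inverse_def by blast

context cat
begin

lemma quasi_inverse_unitE:
  assumes "quasi_inverse C B FO FM GO GM"
  obtains phi where
    "\<And>a. obj a \<Longrightarrow> arr (phi a) \<and> dom (phi a) = a \<and> cod (phi a) = GO (FO a) \<and> iso C (phi a)"
    "\<And>f. arr f \<Longrightarrow> phi (cod f) \<cdot> f = GM (FM f) \<cdot> phi (dom f)"
proof -
  obtain phi where phi: "nat_iso C C (\<lambda>a. a) (\<lambda>f. f) (GO \<circ> FO) (GM \<circ> FM) phi"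
    using assms unfolding quasi_inverse_def by blast
  show thesis
    by (rule that [of phi]) (use phi in \<open>simp_all add: nat_iso_def\<close>)
qed

lemma quasi_inverse_faithful:
  assumes qi: "quasi_inverse C B FO FM GO GM"
    and u: "arr u" "arr u'" "dom u = dom u'" "cod u = cod u'" and eq: "FM u = FM u'"
  shows "u = u'"
proof -
  obtain phi where phi: "\<And>a. obj a \<Longrightarrow> arr (phi a) \<and> dom (phi a) = a \<and> cod (phi a) = GO (FO a) \<and> iso C (phi a)"
    and nat: "\<And>f. arr f \<Longrightarrow> phi (cod f) \<cdot> f = GM (FM f) \<cdot> phi (dom f)"
    using quasi_inverse_unitE [OF qi] by blast
  have p: "iso C (phi (cod u))" "dom (phi (cod u)) = cod u" using phi [of "cod u"] u(1) by auto
  have e: "phi (cod u) \<cdot> u = phi (cod u) \<cdot> u'"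
    using nat [of u] nat [of u'] u eq by simp
  show "u = u'"
    by (rule iso_cancel_left [OF p(1) u(1,2) _ _ e]) (use p u in simp_all)
qed

lemma quasi_inverse_full:
  assumes qi: "quasi_inverse C B FO FM GO GM"
    and ab: "obj a" "obj b" and F: "F \<in> hom B (FO a) (FO b)"
  obtains u where "u \<in> hom C a b" "FM u = F"
proof -
  have FF: "functor C B FO FM" and G: "functor B C GO GM" using qi unfolding quasi_inverse_def by auto
  obtain phi where phi: "\<And>a. obj a \<Longrightarrow> arr (phi a) \<and> dom (phi a) = a \<and> cod (phi a) = GO (FO a) \<and> iso C (phi a)"
    and nat: "\<And>f. arr f \<Longrightarrow> phi (cod f) \<cdot> f = GM (FM f) \<cdot> phi (dom f)"
    using quasi_inverse_unitE [OF qi] by blast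
  have pa: "arr (phi a)" "dom (phi a) = a" "cod (phi a) = GO (FO a)" "iso C (phi a)"
    and pb: "arr (phi b)" "dom (phi b) = b" "cod (phi b) = GO (FO b)" "iso C (phi b)"
    using phi ab by auto
  have GF: "arr (GM F)" "dom (GM F) = GO (FO a)" "cod (GM F) = GO (FO b)"
    using functor_hom [OF G, of F] F by (auto simp: hom_def)
  define u where "u = inv_arr (phi b) \<cdot> (GM F \<cdot> phi a)"
  have u: "arr u" "dom u = a" "cod u = b" using pa pb GF by (auto simp: u_def)
  have FMu: "FM u \<in> hom B (FO a) (FO b)" using functor_hom [OF FF u(1)] u by simp
  have GFu: "arr (GM (FM u))" "dom (GM (FM u)) = GO (FO a)"
    using functor_hom [OF G, of "FM u"] FMu by (auto simp: hom_def)
  have "GM (FM u) \<cdot> phi a = phi b \<cdot> u" using nat [OF u(1)] u by simp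
  also have "\<dots> = GM F \<cdot> phi a" using pa pb GF by (simp add: u_def)
  finally have e: "GM (FM u) \<cdot> phi a = GM F \<cdot> phi a" .
  have "GM (FM u) = GM F"
    by (rule iso_cancel_right [OF pa(4) GFu(1) GF(1) _ _ e]) (use pa GF GFu in simp_all)
  moreover have "cat B" using G by (simp add: functor_def cat_def)
  ultimately have "FM u = F"
    using cat.quasi_inverse_faithful [OF _ quasi_inverse_sym [OF qi]] FMu F by (auto simp: hom_def)
  thus thesis using u that by simp
qed

lemma quasi_inverse_reflects_iso:
  assumes qi: "quasi_inverse C B FO FM GO GM" and f: "arr f" and i: "iso B (FM f)"
  shows "iso C f"
proof -
  have FF: "functor C B FO FM" and G: "functor B C GO GM" using qi unfolding quasi_inverse_def by auto
  obtain phi where phi: "\<And>a. obj a \<Longrightarrow> arr (phi a) \<and> dom (phi a) = a \<and> cod (phi a) = GO (FO a) \<and> iso C (phi a)"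
    and nat: "\<And>f. arr f \<Longrightarrow> phi (cod f) \<cdot> f = GM (FM f) \<cdot> phi (dom f)"
    using quasi_inverse_unitE [OF qi] by blast
  have pd: "dom (phi (dom f)) = dom f" "cod (phi (dom f)) = GO (FO (dom f))" "iso C (phi (dom f))"
    and pc: "dom (phi (cod f)) = cod f" "cod (phi (cod f)) = GO (FO (cod f))" "iso C (phi (cod f))"
    using phi f by auto
  have "GM (FM f) \<in> hom C (GO (FO (dom f))) (GO (FO (cod f)))"
    using functor_hom [OF G] functor_hom [OF FF f] by (auto simp: hom_def)
  hence GF: "iso C (GM (FM f))" "dom (GM (FM f)) = GO (FO (dom f))" "cod (GM (FM f)) = GO (FO (cod f))"
    using functor_iso [OF G i] by auto
  have "f = inv_arr (phi (cod f)) \<cdot> (GM (FM f) \<cdot> phi (dom f))"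
    using pc f by (simp add: nat [OF f, symmetric])
  moreover have "iso C (inv_arr (phi (cod f)) \<cdot> (GM (FM f) \<cdot> phi (dom f)))"
    using pd pc GF by simp
  ultimately show ?thesis by simp
qed

end

section \<open>Left pre-Hopf monads\<close>

locale lph =
  fixes C :: "('o, 'm) mcat" and T :: "('o, 'm) bimonad_data"
  assumes lph: "left_pre_hopf C T"

lemma (in lph) category_C: "category C"
  using lph unfolding left_pre_hopf_def bimonad_def strict_monoidal_def by blast

sublocale lph \<subseteq> cat C by (rule cat.intro, rule category_C)

context lph
begin

abbreviation tns' (infixr "\<odot>" 70) where "a \<odot> b \<equiv> tns C a b"
abbreviation tnm' (infixr "\<otimes>" 70) where "f \<otimes> g \<equiv> tnm C f g"
abbreviation unit_obj ("\<one>") where "\<one> \<equiv> unt C"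
abbreviation To where "To \<equiv> TO T"
abbreviation Tm where "Tm \<equiv> TM T"
abbreviation mu' ("\<mu>") where "\<mu> \<equiv> mu T"
abbreviation eta' ("\<eta>") where "\<eta> \<equiv> eta T"
abbreviation T\<^sub>2 where "T\<^sub>2 \<equiv> T2 T"
abbreviation T\<^sub>0 where "T\<^sub>0 \<equiv> T0 T"
abbreviation A where "A \<equiv> To \<one>"

lemma bimonad: "bimonad C T" using lph unfolding left_pre_hopf_def by blast
lemma monoidal: "strict_monoidal C" using bimonad unfolding bimonad_def by blast
lemma functor_T: "functor C C To Tm" using bimonad unfolding bimonad_def by blast

lemma obj_unit [simp]: "obj \<one>" using monoidal unfolding strict_monoidal_def by blast
lemma obj_tns [simp]: "obj a \<Longrightarrow> obj b \<Longrightarrow> obj (a \<odot> b)"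
  using monoidal unfolding strict_monoidal_def by blast
lemma tnm_hom: "arr f \<Longrightarrow> arr g \<Longrightarrow> f \<otimes> g \<in> hom C (dom f \<odot> dom g) (cod f \<odot> cod g)"
  using monoidal unfolding strict_monoidal_def by blast
lemma arr_tnm [simp]: "arr f \<Longrightarrow> arr g \<Longrightarrow> arr (f \<otimes> g)"
  and dom_tnm [simp]: "arr f \<Longrightarrow> arr g \<Longrightarrow> dom (f \<otimes> g) = dom f \<odot> dom g"
  and cod_tnm [simp]: "arr f \<Longrightarrow> arr g \<Longrightarrow> cod (f \<otimes> g) = cod f \<odot> cod g"
  using tnm_hom by auto
lemma tnm_idt [simp]: "obj a \<Longrightarrow> obj b \<Longrightarrow> idt a \<otimes> idt b = idt (a \<odot> b)"
  using monoidal unfolding strict_monoidal_def by blast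
lemma interchange:
  "arr f \<Longrightarrow> arr f' \<Longrightarrow> arr g \<Longrightarrow> arr g' \<Longrightarrow> dom f' = cod f \<Longrightarrow> dom g' = cod g \<Longrightarrow>
   (f' \<otimes> g') \<cdot> (f \<otimes> g) = (f' \<cdot> f) \<otimes> (g' \<cdot> g)"
  using monoidal unfolding strict_monoidal_def by metis
lemma tns_assoc [simp]: "obj a \<Longrightarrow> obj b \<Longrightarrow> obj c \<Longrightarrow> (a \<odot> b) \<odot> c = a \<odot> (b \<odot> c)"
  using monoidal unfolding strict_monoidal_def by blast
lemma tnm_assoc [simp]: "arr f \<Longrightarrow> arr g \<Longrightarrow> arr h \<Longrightarrow> (f \<otimes> g) \<otimes> h = f \<otimes> (g \<otimes> h)"
  using monoidal unfolding strict_monoidal_def by blast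
lemma tns_unit [simp]: "obj a \<Longrightarrow> \<one> \<odot> a = a" "obj a \<Longrightarrow> a \<odot> \<one> = a"
  using monoidal unfolding strict_monoidal_def by blast+
lemma tnm_unit [simp]: "arr f \<Longrightarrow> idt \<one> \<otimes> f = f" "arr f \<Longrightarrow> f \<otimes> idt \<one> = f"
  using monoidal unfolding strict_monoidal_def by blast+
lemma tnm_idt_assoc [simp]: "obj a \<Longrightarrow> obj b \<Longrightarrow> arr f \<Longrightarrow> idt a \<otimes> (idt b \<otimes> f) = idt (a \<odot> b) \<otimes> f"
  by (metis arr_idt tnm_assoc tnm_idt)

lemma interchange_extend:
  "arr f \<Longrightarrow> arr f' \<Longrightarrow> arr g \<Longrightarrow> arr g' \<Longrightarrow> dom f' = cod f \<Longrightarrow> dom g' = cod g \<Longrightarrow>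
   arr x \<Longrightarrow> cod x = dom f \<odot> dom g \<Longrightarrow>
   (f' \<otimes> g') \<cdot> ((f \<otimes> g) \<cdot> x) = ((f' \<cdot> f) \<otimes> (g' \<cdot> g)) \<cdot> x"
  by (simp add: interchange [symmetric])

lemma iso_tnm:
  assumes "iso C f" "iso C g"
  shows "iso C (f \<otimes> g)"
  by (rule isoI [where g = "inv_arr f \<otimes> inv_arr g"]) (use assms in \<open>simp_all add: interchange\<close>)

lemma obj_To [simp]: "obj a \<Longrightarrow> obj (To a)" using functor_T unfolding functor_def by blast
lemma Tm_hom: "arr f \<Longrightarrow> Tm f \<in> hom C (To (dom f)) (To (cod f))"
  using functor_T unfolding functor_def by blast
lemma arr_Tm [simp]: "arr f \<Longrightarrow> arr (Tm f)" and dom_Tm [simp]: "arr f \<Longrightarrow> dom (Tm f) = To (dom f)"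
  and cod_Tm [simp]: "arr f \<Longrightarrow> cod (Tm f) = To (cod f)" using Tm_hom by auto
lemma Tm_idt [simp]: "obj a \<Longrightarrow> Tm (idt a) = idt (To a)" using functor_T unfolding functor_def by blast
lemma Tm_comp [simp]: "arr f \<Longrightarrow> arr g \<Longrightarrow> dom g = cod f \<Longrightarrow> Tm (g \<cdot> f) = Tm g \<cdot> Tm f"
  using functor_T unfolding functor_def by auto

lemma Tm_square:
  "arr f \<Longrightarrow> arr g \<Longrightarrow> arr f' \<Longrightarrow> arr g' \<Longrightarrow> dom g = cod f \<Longrightarrow> dom g' = cod f' \<Longrightarrow>
   g \<cdot> f = g' \<cdot> f' \<Longrightarrow> Tm g \<cdot> Tm f = Tm g' \<cdot> Tm f'"
  by (metis Tm_comp)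

lemma mu_eta_hom: "obj X \<Longrightarrow> \<mu> X \<in> hom C (To (To X)) (To X) \<and> \<eta> X \<in> hom C X (To X)"
  using bimonad unfolding bimonad_def by blast
lemma arr_mu [simp]: "obj X \<Longrightarrow> arr (\<mu> X)" and dom_mu [simp]: "obj X \<Longrightarrow> dom (\<mu> X) = To (To X)"
  and cod_mu [simp]: "obj X \<Longrightarrow> cod (\<mu> X) = To X"
  and arr_eta [simp]: "obj X \<Longrightarrow> arr (\<eta> X)" and dom_eta [simp]: "obj X \<Longrightarrow> dom (\<eta> X) = X"
  and cod_eta [simp]: "obj X \<Longrightarrow> cod (\<eta> X) = To X"
  using mu_eta_hom by auto

lemma T2_hom: "obj X \<Longrightarrow> obj Y \<Longrightarrow> T\<^sub>2 X Y \<in> hom C (To (X \<odot> Y)) (To X \<odot> To Y)"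
  using bimonad unfolding bimonad_def by blast
lemma arr_T2 [simp]: "obj X \<Longrightarrow> obj Y \<Longrightarrow> arr (T\<^sub>2 X Y)"
  and dom_T2 [simp]: "obj X \<Longrightarrow> obj Y \<Longrightarrow> dom (T\<^sub>2 X Y) = To (X \<odot> Y)"
  and cod_T2 [simp]: "obj X \<Longrightarrow> obj Y \<Longrightarrow> cod (T\<^sub>2 X Y) = To X \<odot> To Y"
  using T2_hom by auto
lemma T0_hom: "T\<^sub>0 \<in> hom C A \<one>" using bimonad unfolding bimonad_def by blast
lemma arr_T0 [simp]: "arr T\<^sub>0" and dom_T0 [simp]: "dom T\<^sub>0 = A" and cod_T0 [simp]: "cod T\<^sub>0 = \<one>"
  using T0_hom by auto

lemma mu_nat: "arr f \<Longrightarrow> cod f = Y \<Longrightarrow> \<mu> Y \<cdot> Tm (Tm f) = Tm f \<cdot> \<mu> (dom f)"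
  using bimonad unfolding bimonad_def by blast
lemma eta_nat: "arr f \<Longrightarrow> cod f = Y \<Longrightarrow> \<eta> Y \<cdot> f = Tm f \<cdot> \<eta> (dom f)"
  using bimonad unfolding bimonad_def by blast
lemma mu_assoc: "obj X \<Longrightarrow> \<mu> X \<cdot> Tm (\<mu> X) = \<mu> X \<cdot> \<mu> (To X)"
  using bimonad unfolding bimonad_def by blast
lemma mu_eta_left [simp]: "obj X \<Longrightarrow> \<mu> X \<cdot> \<eta> (To X) = idt (To X)"
  using bimonad unfolding bimonad_def by blast
lemma mu_eta_right [simp]: "obj X \<Longrightarrow> \<mu> X \<cdot> Tm (\<eta> X) = idt (To X)"
  using bimonad unfolding bimonad_def by blast
lemma T2_nat: "arr f \<Longrightarrow> arr g \<Longrightarrow> cod f = X \<Longrightarrow> cod g = Y \<Longrightarrow>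
   T\<^sub>2 X Y \<cdot> Tm (f \<otimes> g) = (Tm f \<otimes> Tm g) \<cdot> T\<^sub>2 (dom f) (dom g)"
  using bimonad unfolding bimonad_def by blast
lemma T2_nat_right: "arr g \<Longrightarrow> cod g = Y \<Longrightarrow> T\<^sub>2 \<one> Y \<cdot> Tm g = (idt A \<otimes> Tm g) \<cdot> T\<^sub>2 \<one> (dom g)"
  using T2_nat [of "idt \<one>" g \<one> Y] by simp
lemma T2_coassoc: "obj X \<Longrightarrow> obj Y \<Longrightarrow> obj Z \<Longrightarrow>
   (T\<^sub>2 X Y \<otimes> idt (To Z)) \<cdot> T\<^sub>2 (X \<odot> Y) Z = (idt (To X) \<otimes> T\<^sub>2 Y Z) \<cdot> T\<^sub>2 X (Y \<odot> Z)"
  using bimonad unfolding bimonad_def by blast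
lemma T2_coassoc_unit: "obj Z \<Longrightarrow> (T\<^sub>2 \<one> \<one> \<otimes> idt (To Z)) \<cdot> T\<^sub>2 \<one> Z = (idt A \<otimes> T\<^sub>2 \<one> Z) \<cdot> T\<^sub>2 \<one> Z"
  using T2_coassoc [of \<one> \<one> Z] by simp
lemma T2_counit: "obj X \<Longrightarrow> (T\<^sub>0 \<otimes> idt (To X)) \<cdot> T\<^sub>2 \<one> X = idt (To X)"
  using bimonad unfolding bimonad_def by blast
lemma mu_comonoidal: "obj X \<Longrightarrow> obj Y \<Longrightarrow>
   T\<^sub>2 X Y \<cdot> \<mu> (X \<odot> Y) = (\<mu> X \<otimes> \<mu> Y) \<cdot> (T\<^sub>2 (To X) (To Y) \<cdot> Tm (T\<^sub>2 X Y))"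
  using bimonad unfolding bimonad_def by blast
lemma eta_comonoidal: "obj X \<Longrightarrow> obj Y \<Longrightarrow> T\<^sub>2 X Y \<cdot> \<eta> (X \<odot> Y) = \<eta> X \<otimes> \<eta> Y"
  using bimonad unfolding bimonad_def by blast

lemma eta_unit_slide:
  "arr f \<Longrightarrow> (\<eta> \<one> \<otimes> idt (cod f)) \<cdot> f = (idt A \<otimes> f) \<cdot> (\<eta> \<one> \<otimes> idt (dom f))"
  using interchange [of "idt \<one>" "\<eta> \<one>" f "idt (cod f)"] interchange [of "\<eta> \<one>" "idt A" "idt (dom f)" f]
  by simp

definition H where "H X = (idt A \<otimes> \<mu> X) \<cdot> T\<^sub>2 \<one> (To X)"
definition Hi where "Hi X = inv_arr (H X)"

lemma H_iso: "obj X \<Longrightarrow> iso C (H X)"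
  using lph unfolding left_pre_hopf_def H_def by blast
lemma arr_H [simp]: "obj X \<Longrightarrow> arr (H X)" and dom_H [simp]: "obj X \<Longrightarrow> dom (H X) = To (To X)"
  and cod_H [simp]: "obj X \<Longrightarrow> cod (H X) = A \<odot> To X"
  by (simp_all add: H_def)
lemma arr_Hi [simp]: "obj X \<Longrightarrow> arr (Hi X)" and dom_Hi [simp]: "obj X \<Longrightarrow> dom (Hi X) = A \<odot> To X"
  and cod_Hi [simp]: "obj X \<Longrightarrow> cod (Hi X) = To (To X)"
  and H_Hi [simp]: "obj X \<Longrightarrow> H X \<cdot> Hi X = idt (A \<odot> To X)"
  and Hi_H [simp]: "obj X \<Longrightarrow> Hi X \<cdot> H X = idt (To (To X))"
  using H_iso by (simp_all add: Hi_def)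

lemma H_nat: "arr f \<Longrightarrow> cod f = Y \<Longrightarrow> H Y \<cdot> Tm (Tm f) = (idt A \<otimes> Tm f) \<cdot> H (dom f)"
proof -
  assume "arr f" "cod f = Y"
  hence f: "arr f" "cod f = Y" "obj Y" by auto
  have "H Y \<cdot> Tm (Tm f) = (idt A \<otimes> \<mu> Y) \<cdot> (T\<^sub>2 \<one> (To Y) \<cdot> Tm (Tm f))" using f by (simp add: H_def)
  also have "\<dots> = (idt A \<otimes> (\<mu> Y \<cdot> Tm (Tm f))) \<cdot> T\<^sub>2 \<one> (To (dom f))"
    using f by (simp add: T2_nat_right interchange_extend)
  also have "\<dots> = (idt A \<otimes> Tm f) \<cdot> H (dom f)"
    using f by (simp add: mu_nat H_def interchange_extend)
  finally show ?thesis .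
qed

lemma Hi_nat: "arr f \<Longrightarrow> cod f = Y \<Longrightarrow> Hi Y \<cdot> (idt A \<otimes> Tm f) = Tm (Tm f) \<cdot> Hi (dom f)"
proof -
  assume f0: "arr f" "cod f = Y"
  hence f: "arr f" "cod f = Y" "obj Y" by auto
  have e: "(Hi Y \<cdot> (idt A \<otimes> Tm f)) \<cdot> H (dom f) = (Tm (Tm f) \<cdot> Hi (dom f)) \<cdot> H (dom f)"
    using f by (simp add: H_nat [OF f0, symmetric] comp_extend [OF Hi_H])
  show ?thesis by (rule iso_cancel_right [OF H_iso [of "dom f"] _ _ _ _ e]) (use f in auto)
qed

lemma H_eta: "obj X \<Longrightarrow> H X \<cdot> Tm (\<eta> X) = T\<^sub>2 \<one> X"
  by (simp add: H_def T2_nat_right interchange_extend)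

lemma H_mu: "obj X \<Longrightarrow> H X \<cdot> Tm (\<mu> X) = (idt A \<otimes> \<mu> X) \<cdot> H (To X)"
  by (simp add: H_def T2_nat_right interchange_extend mu_assoc)

text \<open>The identity behind the invertibility of the operator \<open>K\<close> below.\<close>

lemma Tm_mu_Hi: "obj X \<Longrightarrow> Tm (\<mu> X) \<cdot> (Hi (To X) \<cdot> ((idt A \<otimes> \<eta> (To X)) \<cdot> T\<^sub>2 \<one> X)) = Tm (\<eta> X)"
proof -
  assume X: "obj X"
  have "H X \<cdot> (Tm (\<mu> X) \<cdot> (Hi (To X) \<cdot> ((idt A \<otimes> \<eta> (To X)) \<cdot> T\<^sub>2 \<one> X)))
      = (idt A \<otimes> \<mu> X) \<cdot> (H (To X) \<cdot> (Hi (To X) \<cdot> ((idt A \<otimes> \<eta> (To X)) \<cdot> T\<^sub>2 \<one> X)))"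
    using X by (simp add: comp_extend [OF H_mu])
  also have "\<dots> = T\<^sub>2 \<one> X" using X by (simp add: comp_extend [OF H_Hi] interchange_extend)
  also have "\<dots> = H X \<cdot> Tm (\<eta> X)" using X by (simp add: H_eta)
  finally have e: "H X \<cdot> (Tm (\<mu> X) \<cdot> (Hi (To X) \<cdot> ((idt A \<otimes> \<eta> (To X)) \<cdot> T\<^sub>2 \<one> X))) = H X \<cdot> Tm (\<eta> X)" .
  show ?thesis by (rule iso_cancel_left [OF H_iso [of X] _ _ _ _ e]) (use X in auto)
qed


text \<open>The pre-Hopf
  condition makes \<open>K\<^sub>N\<close> invertible, with inverse \<open>K\<^sub>N\<inverse> = T(r) H\<^sub>N\<inverse> (A \<otimes> \<eta>\<^sub>N)\<close>; this is
  the key to recognising every Hopf module as an equalizer.\<close>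

definition K where "K N r = (idt A \<otimes> r) \<cdot> T\<^sub>2 \<one> N"
definition Ki where "Ki N r = Tm r \<cdot> (Hi N \<cdot> (idt A \<otimes> \<eta> N))"

lemma t_moduleD:
  "t_module C T N r \<Longrightarrow> obj N \<and> arr r \<and> dom r = To N \<and> cod r = N \<and>
     r \<cdot> Tm r = r \<cdot> \<mu> N \<and> r \<cdot> \<eta> N = idt N"
  unfolding t_module_def by auto

lemma K_type [simp]:
  "obj N \<Longrightarrow> arr r \<Longrightarrow> dom r = To N \<Longrightarrow> cod r = N \<Longrightarrow>
   arr (K N r) \<and> dom (K N r) = To N \<and> cod (K N r) = A \<odot> N"
  by (simp add: K_def)

lemma Ki_type [simp]:
  "obj N \<Longrightarrow> arr r \<Longrightarrow> dom r = To N \<Longrightarrow> cod r = N \<Longrightarrow>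
   arr (Ki N r) \<and> dom (Ki N r) = A \<odot> N \<and> cod (Ki N r) = To N"
  by (simp add: Ki_def)

lemma K_Ki:
  assumes "t_module C T N r"
  shows "K N r \<cdot> Ki N r = idt (A \<odot> N)"
proof -
  note m = t_moduleD [OF assms]
  have "K N r \<cdot> Ki N r = (idt A \<otimes> r) \<cdot> (T\<^sub>2 \<one> N \<cdot> (Tm r \<cdot> (Hi N \<cdot> (idt A \<otimes> \<eta> N))))"
    using m by (simp add: K_def Ki_def)
  also have "\<dots> = (idt A \<otimes> (r \<cdot> Tm r)) \<cdot> (T\<^sub>2 \<one> (To N) \<cdot> (Hi N \<cdot> (idt A \<otimes> \<eta> N)))"
    using m by (simp add: comp_extend [OF T2_nat_right] interchange_extend)
  also have "\<dots> = (idt A \<otimes> r) \<cdot> (H N \<cdot> (Hi N \<cdot> (idt A \<otimes> \<eta> N)))"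
    using m by (simp add: H_def interchange_extend)
  also have "\<dots> = idt (A \<odot> N)"
    using m by (simp add: comp_extend [OF H_Hi] interchange)
  finally show ?thesis .
qed

lemma Ki_K:
  assumes "t_module C T N r"
  shows "Ki N r \<cdot> K N r = idt (To N)"
proof -
  note m = t_moduleD [OF assms]
  have "Ki N r \<cdot> K N r = Tm r \<cdot> (Hi N \<cdot> ((idt A \<otimes> (\<eta> N \<cdot> r)) \<cdot> T\<^sub>2 \<one> N))"
    using m by (simp add: K_def Ki_def interchange_extend)
  also have "\<dots> = Tm r \<cdot> (Hi N \<cdot> ((idt A \<otimes> Tm r) \<cdot> ((idt A \<otimes> \<eta> (To N)) \<cdot> T\<^sub>2 \<one> N)))"
    using m by (simp add: eta_nat interchange_extend)
  also have "\<dots> = (Tm r \<cdot> Tm (Tm r)) \<cdot> (Hi (To N) \<cdot> ((idt A \<otimes> \<eta> (To N)) \<cdot> T\<^sub>2 \<one> N))"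
    using m by (simp add: comp_extend [OF Hi_nat])
  also have "\<dots> = Tm r \<cdot> (Tm (\<mu> N) \<cdot> (Hi (To N) \<cdot> ((idt A \<otimes> \<eta> (To N)) \<cdot> T\<^sub>2 \<one> N)))"
  proof -
    have e: "Tm r \<cdot> Tm (Tm r) = Tm r \<cdot> Tm (\<mu> N)" by (rule Tm_square) (use m in auto)
    show ?thesis using m by (simp add: comp_extend [OF e])
  qed
  also have "\<dots> = Tm r \<cdot> Tm (\<eta> N)"
    using m by (simp add: Tm_mu_Hi)
  also have "\<dots> = idt (To N)"
    using m by (simp del: Tm_comp add: Tm_comp [symmetric])
  finally show ?thesis .
qed

lemma K_Ki_cancel:
  "t_module C T N r \<Longrightarrow> arr x \<Longrightarrow> cod x = A \<odot> N \<Longrightarrow> K N r \<cdot> (Ki N r \<cdot> x) = x"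
  using t_moduleD [of N r] by (simp add: comp_extend [OF K_Ki])

lemma Ki_K_cancel:
  "t_module C T N r \<Longrightarrow> arr x \<Longrightarrow> cod x = To N \<Longrightarrow> Ki N r \<cdot> (K N r \<cdot> x) = x"
  using t_moduleD [of N r] by (simp add: comp_extend [OF Ki_K])


definition hopf_section where "hopf_section M r \<rho> = Ki M r \<cdot> \<rho>"

lemma hopf_moduleD:
  "hopf_module C T (M, r, \<rho>) \<Longrightarrow> t_module C T M r \<and> obj M \<and> arr r \<and> dom r = To M \<and> cod r = M \<and>
   r \<cdot> Tm r = r \<cdot> \<mu> M \<and> r \<cdot> \<eta> M = idt M \<and> arr \<rho> \<and> dom \<rho> = M \<and> cod \<rho> = A \<odot> M \<and>
   (T\<^sub>2 \<one> \<one> \<otimes> idt M) \<cdot> \<rho> = (idt A \<otimes> \<rho>) \<cdot> \<rho> \<and> (T\<^sub>0 \<otimes> idt M) \<cdot> \<rho> = idt M \<and>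
   \<rho> \<cdot> r = (\<mu> \<one> \<otimes> r) \<cdot> (T\<^sub>2 A M \<cdot> Tm \<rho>)"
  unfolding hopf_module_def t_module_def t1_comodule_def by auto

context
  fixes M r \<rho> assumes hopf: "hopf_module C T (M, r, \<rho>)"
begin

lemma hopf:
  "t_module C T M r" "obj M" "arr r" "dom r = To M" "cod r = M"
  "r \<cdot> Tm r = r \<cdot> \<mu> M" "r \<cdot> \<eta> M = idt M" "arr \<rho>" "dom \<rho> = M" "cod \<rho> = A \<odot> M"
  "(T\<^sub>2 \<one> \<one> \<otimes> idt M) \<cdot> \<rho> = (idt A \<otimes> \<rho>) \<cdot> \<rho>" "(T\<^sub>0 \<otimes> idt M) \<cdot> \<rho> = idt M"
  "\<rho> \<cdot> r = (\<mu> \<one> \<otimes> r) \<cdot> (T\<^sub>2 A M \<cdot> Tm \<rho>)"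
  using hopf_moduleD [OF hopf] by auto

lemma hopf_section_type [simp]:
  "arr (hopf_section M r \<rho>)" "dom (hopf_section M r \<rho>) = M" "cod (hopf_section M r \<rho>) = To M"
  using hopf by (simp_all add: hopf_section_def)

lemma coaction_action_fork:
  assumes k: "arr k" "cod k = To M" and fork: "Tm (\<eta> \<one> \<otimes> idt M) \<cdot> k = Tm \<rho> \<cdot> k"
  shows "\<rho> \<cdot> (r \<cdot> k) = K M r \<cdot> k"
proof -
  have "\<rho> \<cdot> (r \<cdot> k) = (\<mu> \<one> \<otimes> r) \<cdot> (T\<^sub>2 A M \<cdot> (Tm \<rho> \<cdot> k))"
    using k hopf by (simp add: comp_extend [OF hopf(13)])
  also have "\<dots> = (\<mu> \<one> \<otimes> r) \<cdot> (T\<^sub>2 A M \<cdot> (Tm (\<eta> \<one> \<otimes> idt M) \<cdot> k))"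
    using fork by simp
  also have "\<dots> = (\<mu> \<one> \<otimes> r) \<cdot> ((Tm (\<eta> \<one>) \<otimes> idt (To M)) \<cdot> (T\<^sub>2 \<one> M \<cdot> k))"
    using k hopf by (simp add: comp_extend [OF T2_nat])
  also have "\<dots> = K M r \<cdot> k"
    using k hopf by (simp add: interchange_extend K_def)
  finally show ?thesis .
qed

lemma counit_K: "(T\<^sub>0 \<otimes> idt M) \<cdot> K M r = r"
proof -
  have e: "r \<cdot> (T\<^sub>0 \<otimes> idt (To M)) = T\<^sub>0 \<otimes> r"
    using interchange [of T\<^sub>0 "idt \<one>" "idt (To M)" r] hopf by simp
  have "(T\<^sub>0 \<otimes> idt M) \<cdot> K M r = (T\<^sub>0 \<otimes> r) \<cdot> T\<^sub>2 \<one> M" using hopf by (simp add: K_def interchange_extend)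
  also have "\<dots> = r \<cdot> ((T\<^sub>0 \<otimes> idt (To M)) \<cdot> T\<^sub>2 \<one> M)" using hopf by (simp add: e [symmetric])
  also have "\<dots> = r" using hopf by (simp add: T2_counit)
  finally show ?thesis .
qed

lemma action_section: "r \<cdot> hopf_section M r \<rho> = idt M"
proof -
  have "r \<cdot> hopf_section M r \<rho> = (T\<^sub>0 \<otimes> idt M) \<cdot> (K M r \<cdot> (Ki M r \<cdot> \<rho>))"
    unfolding hopf_section_def by (rule comp_extend [OF counit_K, symmetric]) (use hopf in auto)
  also have "\<dots> = idt M" using hopf by (simp add: K_Ki_cancel)
  finally show ?thesis .
qed

lemma section_factor:
  assumes "arr k" "cod k = To M" "Tm (\<eta> \<one> \<otimes> idt M) \<cdot> k = Tm \<rho> \<cdot> k"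
  shows "hopf_section M r \<rho> \<cdot> (r \<cdot> k) = k"
proof -
  have "hopf_section M r \<rho> \<cdot> (r \<cdot> k) = Ki M r \<cdot> (K M r \<cdot> k)"
    using coaction_action_fork [OF assms] assms hopf by (simp add: hopf_section_def)
  also have "\<dots> = k" using assms hopf by (simp add: Ki_K_cancel)
  finally show ?thesis .
qed

text \<open>To see that \<open>j\<close> itself equalizes the pair we use the module structure
  \<open>(\<mu>\<^sub>\<one> \<otimes> r) T\<^sub>2(A, M)\<close> on \<open>A \<otimes> M\<close>, for which \<open>\<rho>\<close> is a module morphism.\<close>

definition action2 where "action2 = (\<mu> \<one> \<otimes> r) \<cdot> T\<^sub>2 A M"

lemma action2_type [simp]: "arr action2" "dom action2 = To (A \<odot> M)" "cod action2 = A \<odot> M"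
  using hopf by (simp_all add: action2_def)

lemma t_module_action2: "t_module C T (A \<odot> M) action2"
proof -
  have unit: "action2 \<cdot> \<eta> (A \<odot> M) = idt (A \<odot> M)"
    using hopf by (simp add: action2_def eta_comonoidal interchange)
  have "action2 \<cdot> Tm action2 = (\<mu> \<one> \<otimes> r) \<cdot> ((Tm (\<mu> \<one>) \<otimes> Tm r) \<cdot> (T\<^sub>2 (To A) (To M) \<cdot> Tm (T\<^sub>2 A M)))"
    using hopf by (simp add: action2_def comp_extend [OF T2_nat])
  also have "\<dots> = ((\<mu> \<one> \<cdot> \<mu> A) \<otimes> (r \<cdot> \<mu> M)) \<cdot> (T\<^sub>2 (To A) (To M) \<cdot> Tm (T\<^sub>2 A M))"
    using hopf by (simp add: interchange_extend mu_assoc del: hopf(6))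
  also have "\<dots> = action2 \<cdot> \<mu> (A \<odot> M)"
    using hopf by (simp add: action2_def interchange_extend [symmetric] mu_comonoidal)
  finally show ?thesis unfolding t_module_def using unit hopf by simp
qed

lemma K_action2_coaction: "K (A \<odot> M) action2 \<cdot> Tm \<rho> = (idt A \<otimes> \<rho>) \<cdot> K M r"
proof -
  have "K (A \<odot> M) action2 \<cdot> Tm \<rho> = (idt A \<otimes> (action2 \<cdot> Tm \<rho>)) \<cdot> T\<^sub>2 \<one> M"
    using hopf by (simp add: K_def T2_nat_right interchange_extend)
  also have "\<dots> = (idt A \<otimes> \<rho>) \<cdot> K M r"
    using hopf by (simp add: action2_def K_def interchange_extend del: hopf(13))
  finally show ?thesis .
qed

lemma K_action2_unit: "K (A \<odot> M) action2 \<cdot> Tm (\<eta> \<one> \<otimes> idt M) = (T\<^sub>2 \<one> \<one> \<otimes> idt M) \<cdot> K M r"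
proof -
  have e: "action2 \<cdot> Tm (\<eta> \<one> \<otimes> idt M) = K M r"
    using hopf by (simp add: action2_def T2_nat interchange_extend K_def)
  have "K (A \<odot> M) action2 \<cdot> Tm (\<eta> \<one> \<otimes> idt M) = (idt A \<otimes> K M r) \<cdot> T\<^sub>2 \<one> M"
    using hopf by (simp add: K_def T2_nat_right interchange_extend e)
  also have "\<dots> = (idt A \<otimes> (idt A \<otimes> r)) \<cdot> ((idt A \<otimes> T\<^sub>2 \<one> M) \<cdot> T\<^sub>2 \<one> M)"
    using hopf by (simp add: K_def interchange_extend del: tnm_idt_assoc)
  also have "\<dots> = (idt (A \<odot> A) \<otimes> r) \<cdot> ((T\<^sub>2 \<one> \<one> \<otimes> idt (To M)) \<cdot> T\<^sub>2 \<one> M)"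
    using hopf by (simp add: T2_coassoc_unit)
  also have "\<dots> = (T\<^sub>2 \<one> \<one> \<otimes> idt M) \<cdot> K M r"
    using hopf by (simp add: interchange_extend K_def)
  finally show ?thesis .
qed

lemma section_fork: "Tm \<rho> \<cdot> hopf_section M r \<rho> = Tm (\<eta> \<one> \<otimes> idt M) \<cdot> hopf_section M r \<rho>"
proof -
  note Kj = K_Ki_cancel [OF hopf(1) hopf(8,10)]
  have "K (A \<odot> M) action2 \<cdot> (Tm \<rho> \<cdot> hopf_section M r \<rho>) = (idt A \<otimes> \<rho>) \<cdot> \<rho>"
    using hopf by (simp add: hopf_section_def comp_extend [OF K_action2_coaction] Kj)
  also have "\<dots> = K (A \<odot> M) action2 \<cdot> (Tm (\<eta> \<one> \<otimes> idt M) \<cdot> hopf_section M r \<rho>)"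
    using hopf by (simp add: hopf_section_def comp_extend [OF K_action2_unit] Kj)
  finally have e: "K (A \<odot> M) action2 \<cdot> (Tm \<rho> \<cdot> hopf_section M r \<rho>) =
      K (A \<odot> M) action2 \<cdot> (Tm (\<eta> \<one> \<otimes> idt M) \<cdot> hopf_section M r \<rho>)" .
  show ?thesis
    by (rule retraction_cancel [where l = "Ki (A \<odot> M) action2", OF _ _ _ _ _ _ _ _ e])
      (use hopf Ki_K [OF t_module_action2] in auto)
qed

theorem section_equalizer:
  "is_equalizer C (Tm (\<eta> \<one> \<otimes> idt M)) (Tm \<rho>) M (hopf_section M r \<rho>)"
  unfolding is_equalizer_def
proof (intro conjI ballI impI)
  fix Z k assume Z: "Z \<in> Obj C" "k \<in> hom C Z (dom (Tm (\<eta> \<one> \<otimes> idt M)))"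
    "Tm (\<eta> \<one> \<otimes> idt M) \<cdot> k = Tm \<rho> \<cdot> k"
  have k: "arr k" "dom k = Z" "cod k = To M" using Z hopf by auto
  show "\<exists>!u. u \<in> hom C Z M \<and> hopf_section M r \<rho> \<cdot> u = k"
  proof (rule ex1I [where a = "r \<cdot> k"])
    show "r \<cdot> k \<in> hom C Z M \<and> hopf_section M r \<rho> \<cdot> (r \<cdot> k) = k"
      using section_factor [OF k(1,3) Z(3)] k hopf by simp
  next
    fix u assume u: "u \<in> hom C Z M \<and> hopf_section M r \<rho> \<cdot> u = k"
    have "r \<cdot> k = r \<cdot> (hopf_section M r \<rho> \<cdot> u)" using u by simp
    also have "\<dots> = u"
      using conjunct1 [OF u] hopf by (simp add: comp_extend [OF action_section])
    finally show "u = r \<cdot> k" by simp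
  qed
qed (use hopf section_fork in auto)

end

end

section \<open>The category of Hopf modules and the free functor\<close>

context lph
begin

lemma hopf_morphism_iff:
  "hopf_morphism C T (M, r, \<rho>) (N, s, \<sigma>) f \<longleftrightarrow>
   arr f \<and> dom f = M \<and> cod f = N \<and> f \<cdot> r = s \<cdot> Tm f \<and> (idt A \<otimes> f) \<cdot> \<rho> = \<sigma> \<cdot> f"
  by (auto simp: hopf_morphism_def)

lemma HM_simps:
  "Obj (HM C T) = {MM. hopf_module C T MM}"
  "Arr (HM C T) = {(MM, NN, f). hopf_module C T MM \<and> hopf_module C T NN \<and> hopf_morphism C T MM NN f}"
  "Src (HM C T) F = fst F" "Tgt (HM C T) F = fst (snd F)" "Idt (HM C T) MM = (MM, MM, idt (fst MM))"
  "Cmp (HM C T) G F = (fst F, fst (snd G), snd (snd G) \<cdot> snd (snd F))"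
  by (simp_all add: HM_def)

lemma HM_arrE:
  assumes "F \<in> Arr (HM C T)"
  obtains M r \<rho> N s \<sigma> f where "F = ((M, r, \<rho>), (N, s, \<sigma>), f)" "hopf_module C T (M, r, \<rho>)"
    "hopf_module C T (N, s, \<sigma>)" "hopf_morphism C T (M, r, \<rho>) (N, s, \<sigma>) f"
  using assms by (auto simp: HM_simps)

lemma hopf_morphism_typeD:
  "hopf_morphism C T (M, r, \<rho>) (N, s, \<sigma>) f \<Longrightarrow> arr f \<and> dom f = M \<and> cod f = N"
  by (simp add: hopf_morphism_iff)

lemma hopf_morphism_id:
  "hopf_module C T (M, r, \<rho>) \<Longrightarrow> hopf_morphism C T (M, r, \<rho>) (M, r, \<rho>) (idt M)"
  using hopf_moduleD [of M r \<rho>] by (simp add: hopf_morphism_iff)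

lemma hopf_morphism_comp:
  assumes hM: "hopf_module C T (M, r, \<rho>)" and hN: "hopf_module C T (N, s, \<sigma>)"
    and hP: "hopf_module C T (P, t, \<tau>)"
    and f: "hopf_morphism C T (M, r, \<rho>) (N, s, \<sigma>) f" and g: "hopf_morphism C T (N, s, \<sigma>) (P, t, \<tau>) g"
  shows "hopf_morphism C T (M, r, \<rho>) (P, t, \<tau>) (g \<cdot> f)"
proof -
  note a = hopf_moduleD [OF hM] hopf_moduleD [OF hN] hopf_moduleD [OF hP]
  have f': "arr f" "dom f = M" "cod f = N" "f \<cdot> r = s \<cdot> Tm f" "(idt A \<otimes> f) \<cdot> \<rho> = \<sigma> \<cdot> f"
    using f by (auto simp: hopf_morphism_iff)
  have g': "arr g" "dom g = N" "cod g = P" "g \<cdot> s = t \<cdot> Tm g" "(idt A \<otimes> g) \<cdot> \<sigma> = \<tau> \<cdot> g"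
    using g by (auto simp: hopf_morphism_iff)
  have action: "(g \<cdot> f) \<cdot> r = t \<cdot> Tm (g \<cdot> f)"
    using a f' g' by (simp add: comp_extend [OF f'(4)] comp_extend [OF g'(4)])
  have "(idt A \<otimes> (g \<cdot> f)) \<cdot> \<rho> = (idt A \<otimes> g) \<cdot> ((idt A \<otimes> f) \<cdot> \<rho>)"
    using a f'(1-3) g'(1-3) by (simp add: interchange_extend)
  also have "\<dots> = \<tau> \<cdot> (g \<cdot> f)"
    using a f' g' by (simp add: f'(5) comp_extend [OF g'(5)])
  finally show ?thesis using action f' g' a by (simp add: hopf_morphism_iff)
qed

lemma category_HM: "category (HM C T)"
  unfolding category_def
proof (intro conjI ballI impI)
  fix F assume "F \<in> Arr (HM C T)"
  thus "Src (HM C T) F \<in> Obj (HM C T)" "Tgt (HM C T) F \<in> Obj (HM C T)"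
    by (auto simp: HM_simps)
next
  fix MM assume "MM \<in> Obj (HM C T)"
  then obtain M r \<rho> where "MM = (M, r, \<rho>)" "hopf_module C T (M, r, \<rho>)"
    by (cases MM) (auto simp: HM_simps)
  thus "Idt (HM C T) MM \<in> hom (HM C T) MM MM"
    using hopf_morphism_id by (auto simp: HM_simps hom_def)
next
  fix F G assume F: "F \<in> Arr (HM C T)" and G: "G \<in> Arr (HM C T)"
    and FG: "Tgt (HM C T) F = Src (HM C T) G"
  obtain M r \<rho> N s \<sigma> f where F': "F = ((M, r, \<rho>), (N, s, \<sigma>), f)" "hopf_module C T (M, r, \<rho>)"
      "hopf_module C T (N, s, \<sigma>)" "hopf_morphism C T (M, r, \<rho>) (N, s, \<sigma>) f"
    using F by (rule HM_arrE)
  obtain P t \<tau> g where G': "G = ((N, s, \<sigma>), (P, t, \<tau>), g)"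
      "hopf_module C T (P, t, \<tau>)" "hopf_morphism C T (N, s, \<sigma>) (P, t, \<tau>) g"
    using G FG F' by (auto simp: HM_simps)
  show "Cmp (HM C T) G F \<in> hom (HM C T) (Src (HM C T) F) (Tgt (HM C T) G)"
    using F' G' hopf_morphism_comp [of M r \<rho> N s \<sigma> P t \<tau> f g] by (auto simp: HM_simps hom_def)
next
  fix F assume "F \<in> Arr (HM C T)"
  then obtain M r \<rho> N s \<sigma> f where F': "F = ((M, r, \<rho>), (N, s, \<sigma>), f)"
      "hopf_morphism C T (M, r, \<rho>) (N, s, \<sigma>) f"
    by (rule HM_arrE)
  thus "Cmp (HM C T) (Idt (HM C T) (Tgt (HM C T) F)) F = F"
    "Cmp (HM C T) F (Idt (HM C T) (Src (HM C T) F)) = F"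
    using hopf_morphism_typeD [OF F'(2)] by (simp_all add: HM_simps)
next
  fix F G H assume F: "F \<in> Arr (HM C T)" and G: "G \<in> Arr (HM C T)" and H: "H \<in> Arr (HM C T)"
    and FG: "Tgt (HM C T) F = Src (HM C T) G" and GH: "Tgt (HM C T) G = Src (HM C T) H"
  obtain M r \<rho> N s \<sigma> f where F': "F = ((M, r, \<rho>), (N, s, \<sigma>), f)"
      "hopf_morphism C T (M, r, \<rho>) (N, s, \<sigma>) f"
    using F by (rule HM_arrE)
  obtain P t \<tau> g where G': "G = ((N, s, \<sigma>), (P, t, \<tau>), g)" "hopf_morphism C T (N, s, \<sigma>) (P, t, \<tau>) g"
    using G FG F' by (auto simp: HM_simps)
  obtain Q v \<omega> h where H': "H = ((P, t, \<tau>), (Q, v, \<omega>), h)" "hopf_morphism C T (P, t, \<tau>) (Q, v, \<omega>) h"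
    using H GH G' by (auto simp: HM_simps)
  show "Cmp (HM C T) H (Cmp (HM C T) G F) = Cmp (HM C T) (Cmp (HM C T) H G) F"
    using F' G' H' hopf_morphism_typeD [OF F'(2)] hopf_morphism_typeD [OF G'(2)]
      hopf_morphism_typeD [OF H'(2)]
    by (simp add: HM_simps)
qed

lemma hopf_morphism_inv:
  assumes hM: "hopf_module C T (M, r, \<rho>)" and hN: "hopf_module C T (N, s, \<sigma>)"
    and f: "hopf_morphism C T (M, r, \<rho>) (N, s, \<sigma>) f" and i: "iso C f"
  shows "hopf_morphism C T (N, s, \<sigma>) (M, r, \<rho>) (inv_arr f)"
proof -
  note a = hopf_moduleD [OF hM] hopf_moduleD [OF hN]
  have f': "arr f" "dom f = M" "cod f = N" "f \<cdot> r = s \<cdot> Tm f" "(idt A \<otimes> f) \<cdot> \<rho> = \<sigma> \<cdot> f"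
    using f by (auto simp: hopf_morphism_iff)
  have Tinv: "Tm f \<cdot> Tm (inv_arr f) = idt (To N)"
    using Tm_comp [of "inv_arr f" f] i f' a by simp
  have "inv_arr f \<cdot> s = inv_arr f \<cdot> (s \<cdot> (Tm f \<cdot> Tm (inv_arr f)))"
    using a f'(1-3) i Tinv by simp
  also have "\<dots> = r \<cdot> Tm (inv_arr f)"
    using a f'(1-3) i by (simp add: comp_extend [OF f'(4) [symmetric]])
  finally have action: "inv_arr f \<cdot> s = r \<cdot> Tm (inv_arr f)" .
  have "(idt A \<otimes> inv_arr f) \<cdot> \<sigma> = (idt A \<otimes> inv_arr f) \<cdot> ((idt A \<otimes> f) \<cdot> (\<rho> \<cdot> inv_arr f))"
    using a f'(1-3) i by (simp add: comp_extend [OF f'(5)])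
  also have "\<dots> = \<rho> \<cdot> inv_arr f" using a f'(1-3) i by (simp add: interchange_extend)
  finally have coaction: "(idt A \<otimes> inv_arr f) \<cdot> \<sigma> = \<rho> \<cdot> inv_arr f" .
  show ?thesis using action coaction a f' i by (simp add: hopf_morphism_iff)
qed

lemma iso_HM_iff:
  assumes F: "F \<in> Arr (HM C T)"
  shows "iso (HM C T) F \<longleftrightarrow> iso C (snd (snd F))"
proof
  assume "iso (HM C T) F"
  then obtain G where G: "G \<in> hom (HM C T) (Tgt (HM C T) F) (Src (HM C T) F)"
      "Cmp (HM C T) G F = Idt (HM C T) (Src (HM C T) F)"
      "Cmp (HM C T) F G = Idt (HM C T) (Tgt (HM C T) F)"
    unfolding iso_def by blast
  obtain M r \<rho> N s \<sigma> f where F': "F = ((M, r, \<rho>), (N, s, \<sigma>), f)"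
      "hopf_morphism C T (M, r, \<rho>) (N, s, \<sigma>) f"
    using F by (rule HM_arrE)
  obtain g where G': "G = ((N, s, \<sigma>), (M, r, \<rho>), g)" "hopf_morphism C T (N, s, \<sigma>) (M, r, \<rho>) g"
    using G(1) F' by (cases G) (auto simp: HM_simps hom_def)
  show "iso C (snd (snd F))"
    using G(2,3) F' G' hopf_morphism_typeD [OF F'(2)] hopf_morphism_typeD [OF G'(2)]
    by (intro isoI [where g = g]) (auto simp: HM_simps)
next
  assume i: "iso C (snd (snd F))"
  obtain M r \<rho> N s \<sigma> f where F': "F = ((M, r, \<rho>), (N, s, \<sigma>), f)" "hopf_module C T (M, r, \<rho>)"
      "hopf_module C T (N, s, \<sigma>)" "hopf_morphism C T (M, r, \<rho>) (N, s, \<sigma>) f"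
    using F by (rule HM_arrE)
  have f: "iso C f" "arr f" "dom f = M" "cod f = N"
    using i F' hopf_morphism_typeD [OF F'(4)] by auto
  have "((N, s, \<sigma>), (M, r, \<rho>), inv_arr f) \<in> hom (HM C T) (N, s, \<sigma>) (M, r, \<rho>)"
    using hopf_morphism_inv [OF F'(2-4) f(1)] F' by (simp add: HM_simps hom_def)
  thus "iso (HM C T) F"
    unfolding iso_def using F f F'(1)
    by (intro conjI bexI [where x = "((N, s, \<sigma>), (M, r, \<rho>), inv_arr f)"]) (simp_all add: HM_simps)
qed

lemma hopf_module_free: "obj X \<Longrightarrow> hopf_module C T (hlO C T X)"
proof -
  assume X: "obj X"
  have "T\<^sub>2 \<one> X \<cdot> \<mu> X = (\<mu> \<one> \<otimes> \<mu> X) \<cdot> (T\<^sub>2 A (To X) \<cdot> Tm (T\<^sub>2 \<one> X))"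
    using mu_comonoidal [of \<one> X] X by simp
  thus ?thesis using X T2_coassoc_unit [of X] T2_counit [of X] mu_assoc [of X]
    unfolding hlO_def hopf_module_def t_module_def t1_comodule_def by simp
qed

lemma hopf_morphism_free: "arr f \<Longrightarrow> hopf_morphism C T (hlO C T (dom f)) (hlO C T (cod f)) (Tm f)"
  unfolding hlO_def hopf_morphism_iff by (simp add: mu_nat T2_nat_right)

lemma hlM_arr: "arr f \<Longrightarrow> hlM C T f \<in> Arr (HM C T)"
  using hopf_module_free hopf_morphism_free by (simp add: HM_simps hlM_def)

lemma functor_hl: "functor C (HM C T) (hlO C T) (hlM C T)"
  unfolding functor_def
proof (intro conjI ballI impI)
  show "category C" by (rule category)
  show "category (HM C T)" by (rule category_HM)
next
  fix a assume "a \<in> Obj C" thus "hlO C T a \<in> Obj (HM C T)" by (simp add: HM_simps hopf_module_free)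
next
  fix f assume "f \<in> Arr C"
  thus "hlM C T f \<in> hom (HM C T) (hlO C T (dom f)) (hlO C T (cod f))"
    using hlM_arr by (simp add: HM_simps hom_def hlM_def)
next
  fix a assume "a \<in> Obj C" thus "hlM C T (idt a) = Idt (HM C T) (hlO C T a)"
    by (simp add: HM_simps hlM_def hlO_def)
next
  fix f g assume "f \<in> Arr C" "g \<in> Arr C" "cod f = dom g"
  thus "hlM C T (g \<cdot> f) = Cmp (HM C T) (hlM C T g) (hlM C T f)"
    by (simp add: HM_simps hlM_def)
qed

text \<open>For free Hopf modules the section \<open>j\<close> is \<open>T\<eta>\<^sub>X\<close>, so \<open>T\<eta>\<^sub>X\<close> equalizes
  \<open>T(\<eta>\<^sub>\<one> \<otimes> TX)\<close> and \<open>TT\<^sub>2(\<one>, X)\<close>.\<close>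

lemma free_equalizer:
  assumes X: "obj X"
  shows "is_equalizer C (Tm (\<eta> \<one> \<otimes> idt (To X))) (Tm (T\<^sub>2 \<one> X)) (To X) (Tm (\<eta> X))"
proof -
  have "hopf_section (To X) (\<mu> X) (T\<^sub>2 \<one> X) = Tm (\<eta> X)"
    using X Tm_mu_Hi [of X] by (simp add: hopf_section_def Ki_def)
  thus ?thesis using section_equalizer [OF hopf_module_free [OF X, unfolded hlO_def]] by simp
qed

lemma free_extension:
  assumes m: "t_module C T M r" and X: "obj X"
    and q: "arr q" "dom q = To X" "cod q = M" "q \<cdot> \<mu> X = r \<cdot> Tm q"
  shows "r \<cdot> Tm (q \<cdot> \<eta> X) = q"
proof -
  note a = t_moduleD [OF m]
  have "r \<cdot> Tm (q \<cdot> \<eta> X) = (r \<cdot> Tm q) \<cdot> Tm (\<eta> X)" using a X q(1-3) by simp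
  also have "\<dots> = q" using a X q(1-3) by (simp add: q(4) [symmetric])
  finally show ?thesis .
qed

text \<open>An arrow \<open>k\<close> into a Hopf module is coinvariant if \<open>\<rho> k = (\<eta>\<^sub>\<one> \<otimes> M) k\<close>; coinvariant
  parts are the universal coinvariant arrows.\<close>

lemma coinvariant_part_iff:
  "coinvariant_part C T (M, r, \<rho>) E i \<longleftrightarrow> is_equalizer C (\<eta> \<one> \<otimes> idt M) \<rho> E i"
  by (simp add: coinvariant_part_def)

lemma hopf_morphism_coinvariant:
  assumes hM: "hopf_module C T (M, r, \<rho>)" and hN: "hopf_module C T (N, s, \<sigma>)"
    and f: "hopf_morphism C T (M, r, \<rho>) (N, s, \<sigma>) f" and i: "arr i" "cod i = M"
    and coinv: "\<rho> \<cdot> i = (\<eta> \<one> \<otimes> idt M) \<cdot> i"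
  shows "\<sigma> \<cdot> (f \<cdot> i) = (\<eta> \<one> \<otimes> idt N) \<cdot> (f \<cdot> i)"
proof -
  note a = hopf_moduleD [OF hM] hopf_moduleD [OF hN]
  have f': "arr f" "dom f = M" "cod f = N" "(idt A \<otimes> f) \<cdot> \<rho> = \<sigma> \<cdot> f"
    using f by (auto simp: hopf_morphism_iff)
  have "\<sigma> \<cdot> (f \<cdot> i) = (idt A \<otimes> f) \<cdot> ((\<eta> \<one> \<otimes> idt M) \<cdot> i)"
    using a f'(1-3) i by (simp add: comp_extend [OF f'(4) [symmetric]] coinv)
  also have "\<dots> = (\<eta> \<one> \<otimes> idt N) \<cdot> (f \<cdot> i)"
  proof -
    have slide: "(idt A \<otimes> f) \<cdot> (\<eta> \<one> \<otimes> idt M) = (\<eta> \<one> \<otimes> idt N) \<cdot> f"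
      using eta_unit_slide [of f] f' by simp
    show ?thesis using a f'(1-3) i by (simp add: comp_extend [OF slide])
  qed
  finally show ?thesis .
qed

lemma eta_coinvariant: "obj X \<Longrightarrow> T\<^sub>2 \<one> X \<cdot> \<eta> X = (\<eta> \<one> \<otimes> idt (To X)) \<cdot> \<eta> X"
  using eta_comonoidal [of \<one> X] eta_unit_slide [of "\<eta> X"] interchange [of "\<eta> \<one>" "idt A" "idt X" "\<eta> X"]
  by simp

lemma hopf_morphism_from_coinvariant:
  assumes hM: "hopf_module C T (M, r, \<rho>)" and k: "obj Z" "arr k" "dom k = Z" "cod k = M"
    and coinv: "\<rho> \<cdot> k = (\<eta> \<one> \<otimes> idt M) \<cdot> k"
  shows "hopf_morphism C T (hlO C T Z) (M, r, \<rho>) (r \<cdot> Tm k)"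
proof -
  note a = hopf [OF hM]
  have action: "(r \<cdot> Tm k) \<cdot> \<mu> Z = r \<cdot> Tm (r \<cdot> Tm k)"
    using a k by (simp add: comp_extend [OF a(6)] mu_nat)
  have fork: "Tm (\<eta> \<one> \<otimes> idt M) \<cdot> Tm k = Tm \<rho> \<cdot> Tm k"
    by (rule Tm_square) (use a k coinv in auto)
  have "\<rho> \<cdot> (r \<cdot> Tm k) = K M r \<cdot> Tm k"
    using coaction_action_fork [OF hM, of "Tm k"] a k fork by simp
  also have "\<dots> = (idt A \<otimes> (r \<cdot> Tm k)) \<cdot> T\<^sub>2 \<one> Z"
    using a k by (simp add: K_def T2_nat_right interchange_extend)
  finally show ?thesis using action a k unfolding hlO_def by (simp add: hopf_morphism_iff)
qed

text \<open>Let \<open>i : E \<rightarrow> M\<close> be a coinvariant part of a Hopf module.  Then \<open>T\<close> preserves this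
  equalizer iff the induced Hopf morphism \<open>r T(i) : hl(E) \<rightarrow> M\<close> is invertible: both \<open>T(i)\<close> and
  the section \<open>j\<close> equalize \<open>T(\<eta>\<^sub>\<one> \<otimes> M)\<close> and \<open>T\<rho>\<close>, and \<open>j (r T(i)) = T(i)\<close>.\<close>

theorem preserves_iff_counit_iso:
  assumes hM: "hopf_module C T (M, r, \<rho>)" and e: "is_equalizer C (\<eta> \<one> \<otimes> idt M) \<rho> E i"
  shows "is_equalizer C (Tm (\<eta> \<one> \<otimes> idt M)) (Tm \<rho>) (To E) (Tm i) \<longleftrightarrow> iso C (r \<cdot> Tm i)"
proof -
  note a = hopf [OF hM] and p = equalizerD [OF e]
  have fork: "Tm (\<eta> \<one> \<otimes> idt M) \<cdot> Tm i = Tm \<rho> \<cdot> Tm i"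
    by (rule Tm_square) (use a p in auto)
  have factor: "hopf_section M r \<rho> \<cdot> (r \<cdot> Tm i) = Tm i"
    using section_factor [OF hM, of "Tm i"] fork a p by simp
  show ?thesis
  proof
    assume "is_equalizer C (Tm (\<eta> \<one> \<otimes> idt M)) (Tm \<rho>) (To E) (Tm i)"
    thus "iso C (r \<cdot> Tm i)"
      using equalizer_comparison_iso [OF section_equalizer [OF hM], of "To E" "Tm i" "r \<cdot> Tm i"]
        factor a p by simp
  next
    assume "iso C (r \<cdot> Tm i)"
    hence "is_equalizer C (Tm (\<eta> \<one> \<otimes> idt M)) (Tm \<rho>) (dom (r \<cdot> Tm i)) (hopf_section M r \<rho> \<cdot> (r \<cdot> Tm i))"
      using a p by (intro equalizer_iso_precomp [OF section_equalizer [OF hM]]) simp_all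
    thus "is_equalizer C (Tm (\<eta> \<one> \<otimes> idt M)) (Tm \<rho>) (To E) (Tm i)"
      using factor a p by simp
  qed
qed

end

section \<open>Coinvariant parts give a quasi-inverse\<close>

context lph
begin

definition induced_arr where
  "induced_arr GO \<iota> F = (SOME u. arr u \<and> dom u = GO (fst F) \<and> cod u = GO (fst (snd F)) \<and>
      \<iota> (fst (snd F)) \<cdot> u = snd (snd F) \<cdot> \<iota> (fst F))"

context
  fixes GO \<iota>
  assumes parts: "\<And>MM. hopf_module C T MM \<Longrightarrow> coinvariant_part C T MM (GO MM) (\<iota> MM)"
begin

lemma parts_equalizer:
  assumes "hopf_module C T (M, r, \<rho>)"
  shows "is_equalizer C (\<eta> \<one> \<otimes> idt M) \<rho> (GO (M, r, \<rho>)) (\<iota> (M, r, \<rho>))"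
  using parts [OF assms] by (simp add: coinvariant_part_iff)

lemma induced_arr:
  assumes F: "F \<in> Arr (HM C T)"
  shows "arr (induced_arr GO \<iota> F) \<and> dom (induced_arr GO \<iota> F) = GO (fst F) \<and>
    cod (induced_arr GO \<iota> F) = GO (fst (snd F)) \<and>
    \<iota> (fst (snd F)) \<cdot> induced_arr GO \<iota> F = snd (snd F) \<cdot> \<iota> (fst F)"
proof -
  obtain M r \<rho> N s \<sigma> f where F': "F = ((M, r, \<rho>), (N, s, \<sigma>), f)" "hopf_module C T (M, r, \<rho>)"
    "hopf_module C T (N, s, \<sigma>)" "hopf_morphism C T (M, r, \<rho>) (N, s, \<sigma>) f"
    using F by (rule HM_arrE)
  note iM = equalizerD [OF parts_equalizer [OF F'(2)]]
  have f: "arr f" "dom f = M" "cod f = N" using hopf_morphism_typeD [OF F'(4)] by auto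
  have fork: "\<sigma> \<cdot> (f \<cdot> \<iota> (M, r, \<rho>)) = (\<eta> \<one> \<otimes> idt N) \<cdot> (f \<cdot> \<iota> (M, r, \<rho>))"
    by (rule hopf_morphism_coinvariant [OF F'(2-4)]) (use iM hopf [OF F'(2)] in auto)
  obtain u where "arr u" "dom u = GO (M, r, \<rho>)" "cod u = GO (N, s, \<sigma>)"
      "\<iota> (N, s, \<sigma>) \<cdot> u = f \<cdot> \<iota> (M, r, \<rho>)"
    by (rule equalizer_lift [OF parts_equalizer [OF F'(3)], of "f \<cdot> \<iota> (M, r, \<rho>)"])
      (use fork [symmetric] f iM hopf [OF F'(3)] in auto)
  hence "\<exists>u. arr u \<and> dom u = GO (fst F) \<and> cod u = GO (fst (snd F)) \<and>
      \<iota> (fst (snd F)) \<cdot> u = snd (snd F) \<cdot> \<iota> (fst F)"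
    using F' by auto
  thus ?thesis unfolding induced_arr_def by (rule someI_ex)
qed

lemma induced_arr_id:
  assumes MM: "MM \<in> Obj (HM C T)"
  shows "induced_arr GO \<iota> (Idt (HM C T) MM) = idt (GO MM)"
proof -
  obtain M r \<rho> where MM': "MM = (M, r, \<rho>)" "hopf_module C T (M, r, \<rho>)"
    using MM by (cases MM) (auto simp: HM_simps)
  have I: "Idt (HM C T) MM \<in> Arr (HM C T)" using MM' hopf_morphism_id by (simp add: HM_simps)
  note g = induced_arr [OF I] and i = equalizerD [OF parts_equalizer [OF MM'(2)]]
  show ?thesis
    by (rule equalizer_mono [OF parts_equalizer [OF MM'(2)]])
      (use g i hopf [OF MM'(2)] MM' in \<open>auto simp: HM_simps\<close>)
qed

lemma induced_arr_comp:
  assumes F: "F \<in> Arr (HM C T)" and G: "G \<in> Arr (HM C T)" and FG: "Tgt (HM C T) F = Src (HM C T) G"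
  shows "induced_arr GO \<iota> (Cmp (HM C T) G F) = induced_arr GO \<iota> G \<cdot> induced_arr GO \<iota> F"
proof -
  obtain M r \<rho> N s \<sigma> f where F': "F = ((M, r, \<rho>), (N, s, \<sigma>), f)" "hopf_module C T (M, r, \<rho>)"
      "hopf_module C T (N, s, \<sigma>)" "hopf_morphism C T (M, r, \<rho>) (N, s, \<sigma>) f"
    using F by (rule HM_arrE)
  obtain P t \<tau> g where G': "G = ((N, s, \<sigma>), (P, t, \<tau>), g)"
      "hopf_module C T (P, t, \<tau>)" "hopf_morphism C T (N, s, \<sigma>) (P, t, \<tau>) g"
    using G FG F' by (auto simp: HM_simps)
  have GF: "Cmp (HM C T) G F \<in> Arr (HM C T)"
    using F' G' hopf_morphism_comp [of M r \<rho> N s \<sigma> P t \<tau> f g] by (simp add: HM_simps)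
  note gF = induced_arr [OF F] and gG = induced_arr [OF G] and gGF = induced_arr [OF GF]
  note iM = equalizerD [OF parts_equalizer [OF F'(2)]] and iN = equalizerD [OF parts_equalizer [OF F'(3)]]
    and iP = equalizerD [OF parts_equalizer [OF G'(2)]]
  have f: "arr f" "dom f = M" "cod f = N" using hopf_morphism_typeD [OF F'(4)] by auto
  have g: "arr g" "dom g = N" "cod g = P" using hopf_morphism_typeD [OF G'(3)] by auto
  have tF: "arr (induced_arr GO \<iota> F)" "dom (induced_arr GO \<iota> F) = GO (M, r, \<rho>)"
      "cod (induced_arr GO \<iota> F) = GO (N, s, \<sigma>)"
    and tG: "arr (induced_arr GO \<iota> G)" "dom (induced_arr GO \<iota> G) = GO (N, s, \<sigma>)"
      "cod (induced_arr GO \<iota> G) = GO (P, t, \<tau>)"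
    using gF gG F'(1) G'(1) by auto
  have eF: "\<iota> (N, s, \<sigma>) \<cdot> induced_arr GO \<iota> F = f \<cdot> \<iota> (M, r, \<rho>)" using gF F' by simp
  have eG: "\<iota> (P, t, \<tau>) \<cdot> induced_arr GO \<iota> G = g \<cdot> \<iota> (N, s, \<sigma>)" using gG G' by simp
  have "\<iota> (P, t, \<tau>) \<cdot> induced_arr GO \<iota> (Cmp (HM C T) G F) = (g \<cdot> f) \<cdot> \<iota> (M, r, \<rho>)"
    using gGF F' G' by (simp add: HM_simps)
  also have "\<dots> = \<iota> (P, t, \<tau>) \<cdot> (induced_arr GO \<iota> G \<cdot> induced_arr GO \<iota> F)"
    using tF tG f g iM iN iP hopf [OF F'(2)] hopf [OF F'(3)] hopf [OF G'(2)]
    by (simp add: comp_extend [OF eG] eF)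
  finally have e: "\<iota> (P, t, \<tau>) \<cdot> induced_arr GO \<iota> (Cmp (HM C T) G F) =
      \<iota> (P, t, \<tau>) \<cdot> (induced_arr GO \<iota> G \<cdot> induced_arr GO \<iota> F)" .
  show ?thesis
    by (rule equalizer_mono [OF parts_equalizer [OF G'(2)] _ _ _ _ _ e])
      (use tF tG gGF F' G' in \<open>auto simp: HM_simps\<close>)
qed

lemma coinvariant_functor_induced: "coinvariant_functor C T GO (induced_arr GO \<iota>) \<iota>"
proof -
  have "functor (HM C T) C GO (induced_arr GO \<iota>)"
    unfolding functor_def
  proof (intro conjI ballI impI)
    fix MM assume "MM \<in> Obj (HM C T)"
    then obtain M r \<rho> where "MM = (M, r, \<rho>)" "hopf_module C T (M, r, \<rho>)"
      by (cases MM) (auto simp: HM_simps)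
    thus "GO MM \<in> Obj C" using equalizerD(9) [OF parts_equalizer] by simp
  qed (use category category_HM induced_arr induced_arr_id induced_arr_comp in \<open>auto simp: HM_simps\<close>)
  thus ?thesis
    unfolding coinvariant_functor_def using parts induced_arr by (auto simp: HM_simps)
qed

end

theorem coinvariant_functor_exists:
  assumes "has_coinvariant_parts C T"
  obtains GO GM \<iota> where "coinvariant_functor C T GO GM \<iota>"
proof -
  define P where "P MM = (SOME p. coinvariant_part C T MM (fst p) (snd p))" for MM
  have "coinvariant_part C T MM (fst (P MM)) (snd (P MM))" if MM: "hopf_module C T MM" for MM
  proof -
    obtain E i where "coinvariant_part C T MM E i"
      using assms MM unfolding has_coinvariant_parts_def by blast
    hence "\<exists>p. coinvariant_part C T MM (fst p) (snd p)" by (intro exI [where x = "(E, i)"]) simp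
    thus ?thesis unfolding P_def by (rule someI_ex)
  qed
  thus thesis
    using coinvariant_functor_induced [of "\<lambda>MM. fst (P MM)" "\<lambda>MM. snd (P MM)"] that by blast
qed

definition unit_arr where
  "unit_arr GO \<iota> X =
     (SOME u. arr u \<and> dom u = X \<and> cod u = GO (hlO C T X) \<and> \<iota> (hlO C T X) \<cdot> u = \<eta> X)"

definition counit_arr where "counit_arr \<iota> MM = fst (snd MM) \<cdot> Tm (\<iota> MM)"

context
  fixes GO GM \<iota> assumes cf: "coinvariant_functor C T GO GM \<iota>"
begin

lemma functor_G: "functor (HM C T) C GO GM"
  using cf unfolding coinvariant_functor_def by blast

lemma G_type:
  "F \<in> Arr (HM C T) \<Longrightarrow> arr (GM F) \<and> dom (GM F) = GO (fst F) \<and> cod (GM F) = GO (fst (snd F))"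
  using functor_hom [OF functor_G] by (auto simp: HM_simps)

lemma iota_equalizer:
  "hopf_module C T (M, r, \<rho>) \<Longrightarrow> is_equalizer C (\<eta> \<one> \<otimes> idt M) \<rho> (GO (M, r, \<rho>)) (\<iota> (M, r, \<rho>))"
  using cf unfolding coinvariant_functor_def by (auto simp: HM_simps coinvariant_part_iff)

lemma iota_natural:
  "F \<in> Arr (HM C T) \<Longrightarrow> \<iota> (fst (snd F)) \<cdot> GM F = snd (snd F) \<cdot> \<iota> (fst F)"
  using cf unfolding coinvariant_functor_def by (auto simp: HM_simps)

lemma iota_free_equalizer:
  "obj X \<Longrightarrow> is_equalizer C (\<eta> \<one> \<otimes> idt (To X)) (T\<^sub>2 \<one> X) (GO (hlO C T X)) (\<iota> (hlO C T X))"
  using iota_equalizer [OF hopf_module_free [unfolded hlO_def]] by (simp add: hlO_def)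

lemma unit_arr:
  assumes X: "obj X"
  shows "arr (unit_arr GO \<iota> X)" "dom (unit_arr GO \<iota> X) = X" "cod (unit_arr GO \<iota> X) = GO (hlO C T X)"
    "\<iota> (hlO C T X) \<cdot> unit_arr GO \<iota> X = \<eta> X"
proof -
  obtain u where "arr u" "dom u = X" "cod u = GO (hlO C T X)" "\<iota> (hlO C T X) \<cdot> u = \<eta> X"
    by (rule equalizer_lift [OF iota_free_equalizer [OF X], of "\<eta> X"])
      (use X eta_coinvariant [OF X] in auto)
  hence "\<exists>u. arr u \<and> dom u = X \<and> cod u = GO (hlO C T X) \<and> \<iota> (hlO C T X) \<cdot> u = \<eta> X" by blast
  from someI_ex [OF this]
  show "arr (unit_arr GO \<iota> X)" "dom (unit_arr GO \<iota> X) = X" "cod (unit_arr GO \<iota> X) = GO (hlO C T X)"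
    "\<iota> (hlO C T X) \<cdot> unit_arr GO \<iota> X = \<eta> X"
    unfolding unit_arr_def by auto
qed

lemma unit_natural:
  assumes f: "arr f"
  shows "unit_arr GO \<iota> (cod f) \<cdot> f = GM (hlM C T f) \<cdot> unit_arr GO \<iota> (dom f)"
proof -
  note pX = unit_arr [of "dom f"] and pY = unit_arr [of "cod f"]
  have hf: "hlM C T f \<in> Arr (HM C T)" using hlM_arr [OF f] .
  have Gf: "arr (GM (hlM C T f))" "dom (GM (hlM C T f)) = GO (hlO C T (dom f))"
      "cod (GM (hlM C T f)) = GO (hlO C T (cod f))"
    using G_type [OF hf] by (auto simp: hlM_def)
  have nat: "\<iota> (hlO C T (cod f)) \<cdot> GM (hlM C T f) = Tm f \<cdot> \<iota> (hlO C T (dom f))"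
    using iota_natural [OF hf] by (simp add: hlM_def)
  note iY = equalizerD [OF iota_free_equalizer [of "cod f"]]
  have "\<iota> (hlO C T (cod f)) \<cdot> (unit_arr GO \<iota> (cod f) \<cdot> f) = \<eta> (cod f) \<cdot> f"
    using pY iY f by (simp add: comp_extend [OF pY(4)])
  also have "\<dots> = Tm f \<cdot> \<eta> (dom f)" using f by (simp add: eta_nat)
  also have "\<dots> = \<iota> (hlO C T (cod f)) \<cdot> (GM (hlM C T f) \<cdot> unit_arr GO \<iota> (dom f))"
    using pX Gf f iY equalizerD [OF iota_free_equalizer [of "dom f"]]
    by (simp add: comp_extend [OF nat])
  finally have e: "\<iota> (hlO C T (cod f)) \<cdot> (unit_arr GO \<iota> (cod f) \<cdot> f) =
      \<iota> (hlO C T (cod f)) \<cdot> (GM (hlM C T f) \<cdot> unit_arr GO \<iota> (dom f))" .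
  show ?thesis
    by (rule equalizer_mono [OF iota_free_equalizer [of "cod f"] _ _ _ _ _ e]) (use pX pY Gf f in auto)
qed

text \<open>If \<open>T\<close> preserves coinvariant parts, \<open>T\<close> maps the unit to an isomorphism, as both \<open>T\<iota>\<close>
  and \<open>T\<eta>\<^sub>X\<close> are equalizers of the same pair; a conservative \<open>T\<close> then makes the unit invertible.\<close>

lemma unit_iso:
  assumes cons: "conservative C T" and pres: "preserves_coinvariant_parts C T" and X: "obj X"
  shows "iso C (unit_arr GO \<iota> X)"
proof -
  note u = unit_arr [OF X] and i = equalizerD [OF iota_free_equalizer [OF X]]
  have "is_equalizer C (Tm (\<eta> \<one> \<otimes> idt (To X))) (Tm (T\<^sub>2 \<one> X)) (To (GO (hlO C T X))) (Tm (\<iota> (hlO C T X)))"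
    using pres hopf_module_free [OF X] iota_free_equalizer [OF X]
    unfolding preserves_coinvariant_parts_def by (simp add: hlO_def coinvariant_part_iff)
  moreover have "Tm (\<iota> (hlO C T X)) \<cdot> Tm (unit_arr GO \<iota> X) = Tm (\<eta> X)"
    using u i X Tm_comp [of "unit_arr GO \<iota> X" "\<iota> (hlO C T X)"] by simp
  ultimately have "iso C (Tm (unit_arr GO \<iota> X))"
    using equalizer_comparison_iso [OF _ free_equalizer [OF X]] u X by simp
  thus ?thesis using cons u unfolding conservative_def by blast
qed

lemma counit_hopf_morphism:
  assumes hM: "hopf_module C T (M, r, \<rho>)"
  shows "hopf_morphism C T (hlO C T (GO (M, r, \<rho>))) (M, r, \<rho>) (counit_arr \<iota> (M, r, \<rho>))"
proof -
  note e = equalizerD [OF iota_equalizer [OF hM]]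
  show ?thesis
    using hopf_morphism_from_coinvariant [OF hM e(9), of "\<iota> (M, r, \<rho>)"] e hopf [OF hM]
    by (simp add: counit_arr_def)
qed

lemma counit_iso:
  assumes pres: "preserves_coinvariant_parts C T" and hM: "hopf_module C T (M, r, \<rho>)"
  shows "iso C (counit_arr \<iota> (M, r, \<rho>))"
  using preserves_iff_counit_iso [OF hM iota_equalizer [OF hM]] pres hM iota_equalizer [OF hM]
  unfolding preserves_coinvariant_parts_def by (simp add: counit_arr_def coinvariant_part_iff)

lemma counit_natural:
  assumes F: "F \<in> Arr (HM C T)"
  shows "counit_arr \<iota> (fst (snd F)) \<cdot> Tm (GM F) = snd (snd F) \<cdot> counit_arr \<iota> (fst F)"
proof -
  obtain M r \<rho> N s \<sigma> f where F': "F = ((M, r, \<rho>), (N, s, \<sigma>), f)" "hopf_module C T (M, r, \<rho>)"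
      "hopf_module C T (N, s, \<sigma>)" "hopf_morphism C T (M, r, \<rho>) (N, s, \<sigma>) f"
    using F by (rule HM_arrE)
  note iM = equalizerD [OF iota_equalizer [OF F'(2)]] and iN = equalizerD [OF iota_equalizer [OF F'(3)]]
  note aM = hopf [OF F'(2)] and aN = hopf [OF F'(3)]
  have f: "arr f" "dom f = M" "cod f = N" "s \<cdot> Tm f = f \<cdot> r"
    using F'(4) by (auto simp: hopf_morphism_iff)
  have GF: "arr (GM F)" "dom (GM F) = GO (M, r, \<rho>)" "cod (GM F) = GO (N, s, \<sigma>)"
    using G_type [OF F] F' by auto
  have "\<iota> (N, s, \<sigma>) \<cdot> GM F = f \<cdot> \<iota> (M, r, \<rho>)" using iota_natural [OF F] F' by simp
  hence Tnat: "Tm (\<iota> (N, s, \<sigma>)) \<cdot> Tm (GM F) = Tm f \<cdot> Tm (\<iota> (M, r, \<rho>))"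
    by (rule Tm_square [rotated 6]) (use GF iM iN f aM aN in auto)
  have "counit_arr \<iota> (N, s, \<sigma>) \<cdot> Tm (GM F) = f \<cdot> counit_arr \<iota> (M, r, \<rho>)"
    using aM aN f iM iN GF by (simp add: counit_arr_def Tnat comp_extend [OF f(4)])
  thus ?thesis using F'(1) by simp
qed

definition counit_inv_HM where
  "counit_inv_HM MM = (MM, hlO C T (GO MM), inv_arr (counit_arr \<iota> MM))"

lemma counit_inv_HM:
  assumes pres: "preserves_coinvariant_parts C T" and MM: "MM \<in> Obj (HM C T)"
  shows "counit_inv_HM MM \<in> hom (HM C T) MM (hlO C T (GO MM)) \<and> iso (HM C T) (counit_inv_HM MM)"
proof -
  obtain M r \<rho> where MM': "MM = (M, r, \<rho>)" "hopf_module C T (M, r, \<rho>)"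
    using MM by (cases MM) (auto simp: HM_simps)
  have ei: "iso C (counit_arr \<iota> MM)" using counit_iso [OF pres MM'(2)] MM' by simp
  have obj: "obj (GO MM)" using equalizerD(9) [OF iota_equalizer [OF MM'(2)]] MM' by simp
  have "hopf_morphism C T MM (hlO C T (GO MM)) (inv_arr (counit_arr \<iota> MM))"
    using hopf_morphism_inv [OF hopf_module_free [OF obj, unfolded hlO_def] MM'(2)]
      counit_hopf_morphism [OF MM'(2)] ei MM' by (simp add: hlO_def)
  hence arr: "counit_inv_HM MM \<in> Arr (HM C T)"
    using hopf_module_free [OF obj] MM' by (simp add: counit_inv_HM_def HM_simps)
  thus ?thesis using iso_HM_iff [OF arr] ei by (simp add: counit_inv_HM_def HM_simps hom_def)
qed

lemma counit_inv_HM_natural: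
  assumes pres: "preserves_coinvariant_parts C T" and F: "F \<in> Arr (HM C T)"
  shows "Cmp (HM C T) (counit_inv_HM (Tgt (HM C T) F)) F =
    Cmp (HM C T) (hlM C T (GM F)) (counit_inv_HM (Src (HM C T) F))"
proof -
  obtain M r \<rho> N s \<sigma> f where F': "F = ((M, r, \<rho>), (N, s, \<sigma>), f)" "hopf_module C T (M, r, \<rho>)"
      "hopf_module C T (N, s, \<sigma>)" "hopf_morphism C T (M, r, \<rho>) (N, s, \<sigma>) f"
    using F by (rule HM_arrE)
  define \<epsilon>M where "\<epsilon>M = counit_arr \<iota> (M, r, \<rho>)"
  define \<epsilon>N where "\<epsilon>N = counit_arr \<iota> (N, s, \<sigma>)"
  have f: "arr f" "dom f = M" "cod f = N" using hopf_morphism_typeD [OF F'(4)] by auto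
  have GF: "arr (GM F)" "dom (GM F) = GO (M, r, \<rho>)" "cod (GM F) = GO (N, s, \<sigma>)"
    using G_type [OF F] F' by auto
  have eM: "iso C \<epsilon>M" "dom \<epsilon>M = To (GO (M, r, \<rho>))" "cod \<epsilon>M = M"
    using counit_iso [OF pres F'(2)] counit_hopf_morphism [OF F'(2)]
    by (auto simp: \<epsilon>M_def hopf_morphism_iff hlO_def)
  have eN: "iso C \<epsilon>N" "dom \<epsilon>N = To (GO (N, s, \<sigma>))" "cod \<epsilon>N = N"
    using counit_iso [OF pres F'(3)] counit_hopf_morphism [OF F'(3)]
    by (auto simp: \<epsilon>N_def hopf_morphism_iff hlO_def)
  have nat: "\<epsilon>N \<cdot> Tm (GM F) = f \<cdot> \<epsilon>M"
    using counit_natural [OF F] F' by (simp add: \<epsilon>M_def \<epsilon>N_def)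
  have "(inv_arr \<epsilon>N \<cdot> f) \<cdot> \<epsilon>M = (Tm (GM F) \<cdot> inv_arr \<epsilon>M) \<cdot> \<epsilon>M"
    using eM eN f GF by (simp add: nat [symmetric])
  hence "inv_arr \<epsilon>N \<cdot> f = Tm (GM F) \<cdot> inv_arr \<epsilon>M"
    by (rule iso_cancel_right [OF eM(1), rotated 4]) (use eM eN f GF in auto)
  thus ?thesis using F' GF by (simp add: HM_simps counit_inv_HM_def hlM_def \<epsilon>M_def \<epsilon>N_def)
qed

theorem coinvariant_functor_quasi_inverse:
  assumes cons: "conservative C T" and pres: "preserves_coinvariant_parts C T"
  shows "quasi_inverse C (HM C T) (hlO C T) (hlM C T) GO GM"
proof -
  have "nat_iso C C (\<lambda>a. a) (\<lambda>f. f) (GO \<circ> hlO C T) (GM \<circ> hlM C T) (unit_arr GO \<iota>)"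
    unfolding nat_iso_def using unit_arr unit_iso [OF cons pres] unit_natural by auto
  moreover have "nat_iso (HM C T) (HM C T) (\<lambda>a. a) (\<lambda>f. f) (hlO C T \<circ> GO) (hlM C T \<circ> GM) counit_inv_HM"
    unfolding nat_iso_def using counit_inv_HM [OF pres] counit_inv_HM_natural [OF pres] by auto
  ultimately show ?thesis unfolding quasi_inverse_def using functor_hl functor_G by blast
qed

end

end

section \<open>An equivalence forces the conditions\<close>

context lph
begin

context
  fixes GO GM assumes qi: "quasi_inverse C (HM C T) (hlO C T) (hlM C T) GO GM"
begin

text \<open>An equivalence \<open>hl\<close> is faithful and full, and it reflects isomorphisms; since a Hopf
  morphism is invertible as soon as its underlying arrow is, \<open>T\<close> is then conservative.\<close>

lemma hl_faithful:
  assumes "arr u" "arr u'" "dom u = dom u'" "cod u = cod u'" "Tm u = Tm u'"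
  shows "u = u'"
  using quasi_inverse_faithful [OF qi] assms by (simp add: hlM_def)

lemma hl_full:
  assumes "obj Z" "obj X" "hopf_morphism C T (hlO C T Z) (hlO C T X) f"
  obtains u where "arr u" "dom u = Z" "cod u = X" "Tm u = f"
proof -
  have "(hlO C T Z, hlO C T X, f) \<in> hom (HM C T) (hlO C T Z) (hlO C T X)"
    using assms hopf_module_free by (simp add: HM_simps hom_def)
  then obtain u where "u \<in> hom C Z X" "hlM C T u = (hlO C T Z, hlO C T X, f)"
    using quasi_inverse_full [OF qi assms(1,2)] by blast
  hence "arr u" "dom u = Z" "cod u = X" "Tm u = f" by (auto simp: hlM_def)
  thus thesis by (rule that)
qed

lemma conservative_T: "conservative C T"
  unfolding conservative_def
proof (intro ballI impI)
  fix f assume f: "f \<in> Arr C" and "iso C (Tm f)"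
  hence "iso (HM C T) (hlM C T f)" using iso_HM_iff [OF hlM_arr [OF f]] by (simp add: hlM_def)
  thus "iso C f" by (rule quasi_inverse_reflects_iso [OF qi f])
qed

text \<open>Since \<open>hl\<close> is full and faithful, \<open>\<eta>\<^sub>X\<close> is a coinvariant part of the free Hopf module on \<open>X\<close>:
  a coinvariant \<open>k : Z \<rightarrow> TX\<close> gives the Hopf morphism \<open>\<mu>\<^sub>X T(k) = T(u)\<close>, and \<open>u\<close> factors \<open>k\<close>.\<close>

lemma free_coinvariant_part:
  assumes X: "obj X"
  shows "is_equalizer C (\<eta> \<one> \<otimes> idt (To X)) (T\<^sub>2 \<one> X) X (\<eta> X)"
  unfolding is_equalizer_def
proof (intro conjI ballI impI)
  fix Z k assume Z: "Z \<in> Obj C" "k \<in> hom C Z (dom (\<eta> \<one> \<otimes> idt (To X)))"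
    "(\<eta> \<one> \<otimes> idt (To X)) \<cdot> k = T\<^sub>2 \<one> X \<cdot> k"
  have k: "arr k" "dom k = Z" "cod k = To X" using Z X by auto
  have "hopf_morphism C T (hlO C T Z) (To X, \<mu> X, T\<^sub>2 \<one> X) (\<mu> X \<cdot> Tm k)"
    using hopf_morphism_from_coinvariant [OF hopf_module_free [OF X, unfolded hlO_def] Z(1) k]
      Z(3) by simp
  then obtain u where u: "arr u" "dom u = Z" "cod u = X" "Tm u = \<mu> X \<cdot> Tm k"
    using hl_full [OF Z(1) X] by (auto simp: hlO_def)
  show "\<exists>!u. u \<in> hom C Z X \<and> \<eta> X \<cdot> u = k"
  proof (rule ex1I [where a = u])
    have "\<eta> X \<cdot> u = \<mu> X \<cdot> (Tm k \<cdot> \<eta> Z)" using u k X Z(1) by (simp add: eta_nat)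
    also have "\<dots> = \<mu> X \<cdot> (\<eta> (To X) \<cdot> k)" using eta_nat [OF k(1,3)] k(2) by simp
    also have "\<dots> = k" using k X by (simp add: comp_extend [OF mu_eta_left])
    finally show "u \<in> hom C Z X \<and> \<eta> X \<cdot> u = k" using u by simp
  next
    fix w assume "w \<in> hom C Z X \<and> \<eta> X \<cdot> w = k"
    hence w: "arr w" "dom w = Z" "cod w = X" "\<eta> X \<cdot> w = k" by auto
    have "Tm w = \<mu> X \<cdot> Tm (\<eta> X \<cdot> w)" using w(1-3) X by (simp add: comp_extend [OF mu_eta_right])
    also have "\<dots> = Tm u" using w(4) u by simp
    finally show "w = u" using hl_faithful [of w u] w u by simp
  qed
qed (use X eta_coinvariant [OF X] in auto)

lemma isomorphic_to_free:
  assumes hM: "hopf_module C T (M, r, \<rho>)"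
  obtains X q where "obj X" "hopf_morphism C T (hlO C T X) (M, r, \<rho>) q" "iso C q"
proof -
  obtain psi where psi: "nat_iso (HM C T) (HM C T) (\<lambda>a. a) (\<lambda>f. f) (hlO C T \<circ> GO) (hlM C T \<circ> GM) psi"
    using qi unfolding quasi_inverse_def by blast
  define X where "X = GO (M, r, \<rho>)"
  have X: "obj X"
    using qi hM unfolding X_def quasi_inverse_def functor_def by (auto simp: HM_simps)
  have P: "psi (M, r, \<rho>) \<in> hom (HM C T) (M, r, \<rho>) (hlO C T X)" "iso (HM C T) (psi (M, r, \<rho>))"
    using psi hM unfolding nat_iso_def X_def by (auto simp: HM_simps)
  then obtain p where pe: "psi (M, r, \<rho>) = ((M, r, \<rho>), hlO C T X, p)"
    by (cases "psi (M, r, \<rho>)") (auto simp: hom_def HM_simps)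
  have hp: "hopf_morphism C T (M, r, \<rho>) (hlO C T X) p" and ip: "iso C p"
    using P pe iso_HM_iff [of "psi (M, r, \<rho>)"] by (auto simp: hom_def HM_simps)
  have "hopf_morphism C T (hlO C T X) (M, r, \<rho>) (inv_arr p)"
    using hopf_morphism_inv [OF hM hopf_module_free [OF X, unfolded hlO_def]] hp ip by (simp add: hlO_def)
  thus thesis using that X ip by simp
qed

lemma coinvariant_part_from_free:
  assumes hM: "hopf_module C T (M, r, \<rho>)" and X: "obj X"
    and q: "hopf_morphism C T (hlO C T X) (M, r, \<rho>) q" "iso C q"
  shows "is_equalizer C (\<eta> \<one> \<otimes> idt M) \<rho> X (q \<cdot> \<eta> X)"
proof -
  note a = hopf [OF hM]
  have q': "arr q" "dom q = To X" "cod q = M" "(idt A \<otimes> q) \<cdot> T\<^sub>2 \<one> X = \<rho> \<cdot> q"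
    using q(1) by (auto simp: hopf_morphism_iff hlO_def)
  show ?thesis
  proof (rule equalizer_transport [OF free_coinvariant_part [OF X] q(2) _ iso_tnm [OF _ q(2)]])
    show "(\<eta> \<one> \<otimes> idt M) \<cdot> q = (idt A \<otimes> q) \<cdot> (\<eta> \<one> \<otimes> idt (To X))"
      using eta_unit_slide [of q] q' by simp
    show "\<rho> \<cdot> q = (idt A \<otimes> q) \<cdot> T\<^sub>2 \<one> X" using q'(4) by simp
  qed (use a q' X in auto)
qed

lemma has_coinvariant_parts_T: "has_coinvariant_parts C T"
  unfolding has_coinvariant_parts_def
proof (intro allI impI)
  fix MM assume hM: "hopf_module C T MM"
  obtain M r \<rho> where MM: "MM = (M, r, \<rho>)" by (cases MM)
  obtain X q where "obj X" "hopf_morphism C T (hlO C T X) (M, r, \<rho>) q" "iso C q"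
    using isomorphic_to_free hM MM by blast
  hence "coinvariant_part C T MM X (q \<cdot> \<eta> X)"
    using coinvariant_part_from_free hM MM by (simp add: coinvariant_part_iff)
  thus "\<exists>E i. coinvariant_part C T MM E i" by blast
qed

text \<open>Preservation: for any coinvariant part \<open>i : E \<rightarrow> M\<close>, the counit \<open>r T(i)\<close> is the
  invertible \<open>q T(e)\<close>, with \<open>e : E \<cong> X\<close> comparing \<open>i\<close> with the transported part \<open>q \<eta>\<^sub>X\<close>.\<close>

lemma preserves_coinvariant_parts_T: "preserves_coinvariant_parts C T"
  unfolding preserves_coinvariant_parts_def
proof (intro allI impI)
  fix M r \<rho> E i
  assume hM: "hopf_module C T (M, r, \<rho>)" and "coinvariant_part C T (M, r, \<rho>) E i"
  hence eq: "is_equalizer C (\<eta> \<one> \<otimes> idt M) \<rho> E i" by (simp add: coinvariant_part_iff)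
  note a = hopf [OF hM] and ai = equalizerD [OF eq]
  obtain X q where X: "obj X" and q: "hopf_morphism C T (hlO C T X) (M, r, \<rho>) q" "iso C q"
    using isomorphic_to_free [OF hM] by blast
  have q': "arr q" "dom q = To X" "cod q = M" "q \<cdot> \<mu> X = r \<cdot> Tm q"
    using q(1) by (auto simp: hopf_morphism_iff hlO_def)
  note eqX = coinvariant_part_from_free [OF hM X q]
  obtain e where e: "arr e" "dom e = E" "cod e = X" "(q \<cdot> \<eta> X) \<cdot> e = i"
    by (rule equalizer_lift [OF eqX, of i]) (use ai a in auto)
  have ie: "iso C e" by (rule equalizer_comparison_iso [OF eqX eq e])
  have Ti: "Tm i = Tm (q \<cdot> \<eta> X) \<cdot> Tm e"
    unfolding e(4) [symmetric] by (rule Tm_comp) (use e q' X in auto)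
  have "r \<cdot> Tm i = (r \<cdot> Tm (q \<cdot> \<eta> X)) \<cdot> Tm e" unfolding Ti using e q' X a by (simp del: Tm_comp)
  also have "\<dots> = q \<cdot> Tm e" by (simp only: free_extension [OF a(1) X q'])
  finally have "iso C (r \<cdot> Tm i)" using q(2) functor_iso [OF functor_T ie] e q' by simp
  thus "is_equalizer C (Tm (\<eta> \<one> \<otimes> idt M)) (Tm \<rho>) (To E) (Tm i)"
    using preserves_iff_counit_iso [OF hM eq] by simp
qed

end

end

theorem mainTheorem17:
  fixes C :: "('o, 'm) mcat" and T :: "('o, 'm) bimonad_data"
  assumes "left_pre_hopf C T"
  shows "(equivalence C (HM C T) (hlO C T) (hlM C T) \<longleftrightarrow>
            conservative C T \<and> has_coinvariant_parts C T \<and> preserves_coinvariant_parts C T) \<and>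
         (conservative C T \<and> has_coinvariant_parts C T \<and> preserves_coinvariant_parts C T \<longrightarrow>
            (\<forall>GO GM \<iota>. coinvariant_functor C T GO GM \<iota> \<longrightarrow>
               quasi_inverse C (HM C T) (hlO C T) (hlM C T) GO GM))"
proof -
  interpret lph C T by (rule lph.intro) (rule assms)
  have sufficient: "conservative C T \<and> has_coinvariant_parts C T \<and> preserves_coinvariant_parts C T \<longrightarrow>
      (\<forall>GO GM \<iota>. coinvariant_functor C T GO GM \<iota> \<longrightarrow> quasi_inverse C (HM C T) (hlO C T) (hlM C T) GO GM)"
    using coinvariant_functor_quasi_inverse by blast
  have "equivalence C (HM C T) (hlO C T) (hlM C T) \<longleftrightarrow>
      conservative C T \<and> has_coinvariant_parts C T \<and> preserves_coinvariant_parts C T"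
  proof
    assume "equivalence C (HM C T) (hlO C T) (hlM C T)"
    then obtain GO GM where qi: "quasi_inverse C (HM C T) (hlO C T) (hlM C T) GO GM"
      unfolding equivalence_def by blast
    show "conservative C T \<and> has_coinvariant_parts C T \<and> preserves_coinvariant_parts C T"
      using conservative_T [OF qi] has_coinvariant_parts_T [OF qi] preserves_coinvariant_parts_T [OF qi]
      by blast
  next
    assume conditions: "conservative C T \<and> has_coinvariant_parts C T \<and> preserves_coinvariant_parts C T"
    then obtain GO GM \<iota> where "coinvariant_functor C T GO GM \<iota>"
      using coinvariant_functor_exists by blast
    hence "quasi_inverse C (HM C T) (hlO C T) (hlM C T) GO GM" using sufficient conditions by blast
    thus "equivalence C (HM C T) (hlO C T) (hlM C T)" unfolding equivalence_def by blast
  qed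
  with sufficient show ?thesis by blast
qed

end
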